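(* Let $(!, \delta, \varepsilon, \Delta, \mathsf{e}, \mathsf{m},\mathsf{m}_K)$ be a monoidal coalgebra modality on an additive symmetric monoidal category $(\mathbb{X}, \otimes, K)$. Then there exists a natural transformation $\mathsf{S}_A: !(A) \to !(A)$ such that for each object $A$, $(!(A), \nabla_A, \mathsf{u}_A, \Delta_A, \mathsf{e}_A, \mathsf{S}_A)$ is a cocommutative Hopf monoid if and only if $(\mathbb{X}, \otimes, K)$ is enriched over abelian groups (i.e. has negatives: every map $f$ has an additive inverse $-f$ with $f+(-f)=0$).
   Context: Composition is in diagrammatic order; $\ell,\rho$ are the unitors. An additive symmetric monoidal category is a symmetric monoidal category whose hom-sets are commutative monoids ($+$, $0$), with composition and $\otimes$ preserving sums and zeros in each argument. A monoidal coalgebra modality is a symmetric monoidal comonad $(!,\delta,\varepsilon,\mathsf{m},\mathsf{m}_K)$ ($\mathsf{m}_{A,B}:!(A)\otimes!(B)\to!(A\otimes B)$, $\mathsf{m}_K:K\to!(K)$) with natural cocommutative comonoids $(!(A),\Delta_A,\mathsf{e}_A)$ such that $\delta_A$ is a comonoid morphism and $\Delta,\mathsf{e}$ are monoidal transformations and $!$-coalgebra morphisms. Here $\nabla_A := (\delta_A\otimes\delta_A);\mathsf{m}_{!(A),!(A)};!\big(((\varepsilon_A\otimes\mathsf{e}_A);\rho_A)+((\mathsf{e}_A\otimes\varepsilon_A);\ell_A)\big)$ and $\mathsf{u}_A:=\mathsf{m}_K;!(0_{K,A})$, which make $(!(A),\nabla_A,\mathsf{u}_A,\Delta_A,\mathsf{e}_A)$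 a commutative and cocommutative bimonoid. A Hopf monoid is a bimonoid with antipode $\mathsf{S}$ satisfying $\Delta;(1\otimes\mathsf{S});\nabla=\mathsf{e};\mathsf{u}=\Delta;(\mathsf{S}\otimes1);\nabla$. *)

theory Defs
  imports Main
begin

text \<open>A category is presented with a type of objects 'o (every element of 'o is an
object), a set of arrows, domain/codomain maps, composition in DIAGRAMMATIC order
(cmp f g = f;g), and identities.\<close>

record ('o,'m) asmc =
  Arr :: "'m set"
  Dom :: "'m \<Rightarrow> 'o"
  Cod :: "'m \<Rightarrow> 'o"
  cmp :: "'m \<Rightarrow> 'm \<Rightarrow> 'm"
  idt :: "'o \<Rightarrow> 'm"
  ten :: "'o \<Rightarrow> 'o \<Rightarrow> 'o"
  tenm :: "'m \<Rightarrow> 'm \<Rightarrow> 'm"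
  unitK :: 'o
  asc :: "'o \<Rightarrow> 'o \<Rightarrow> 'o \<Rightarrow> 'm"   (* (A\<otimes>B)\<otimes>C \<rightarrow> A\<otimes>(B\<otimes>C) *)
  lu :: "'o \<Rightarrow> 'm"
  ru :: "'o \<Rightarrow> 'm"
  symm :: "'o \<Rightarrow> 'o \<Rightarrow> 'm"
  addm :: "'m \<Rightarrow> 'm \<Rightarrow> 'm"
  zerm :: "'o \<Rightarrow> 'o \<Rightarrow> 'm"

definition hom :: "('o,'m,'x) asmc_scheme \<Rightarrow> 'o \<Rightarrow> 'o \<Rightarrow> 'm set" where
  "hom C A B = {f \<in> Arr C. Dom C f = A \<and> Cod C f = B}"

definition is_iso :: "('o,'m,'x) asmc_scheme \<Rightarrow> 'm \<Rightarrow> 'o \<Rightarrow> 'o \<Rightarrow> bool" where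
  "is_iso C f A B \<longleftrightarrow> f \<in> hom C A B \<and>
     (\<exists>g \<in> hom C B A. cmp C f g = idt C A \<and> cmp C g f = idt C B)"

definition cinv :: "('o,'m,'x) asmc_scheme \<Rightarrow> 'm \<Rightarrow> 'm" where
  "cinv C f = (THE g. g \<in> hom C (Cod C f) (Dom C f) \<and>
       cmp C f g = idt C (Dom C f) \<and> cmp C g f = idt C (Cod C f))"

context
  fixes C :: "('o,'m,'x) asmc_scheme"
begin

abbreviation (input) cmpC (infixl ";;" 55) where "f ;; g \<equiv> cmp C f g"
abbreviation (input) tenC (infixr "\<otimes>" 70) where "A \<otimes> B \<equiv> ten C A B"
abbreviation (input) tenmC (infixr "\<otimes>\<^sub>m" 70) where "f \<otimes>\<^sub>m g \<equiv> tenm C f g"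
abbreviation (input) addC (infixl "+\<^sub>m" 65) where "f +\<^sub>m g \<equiv> addm C f g"
abbreviation (input) KC where "KC \<equiv> unitK C"
abbreviation (input) iC where "iC \<equiv> idt C"
abbreviation (input) zC where "zC \<equiv> zerm C"

definition category :: bool where
  "category \<longleftrightarrow>
    (\<forall>A. idt C A \<in> hom C A A) \<and>
    (\<forall>A B D f g. f \<in> hom C A B \<longrightarrow> g \<in> hom C B D \<longrightarrow> cmp C f g \<in> hom C A D) \<and>
    (\<forall>A B f. f \<in> hom C A B \<longrightarrow> cmp C (idt C A) f = f \<and> cmp C f (idt C B) = f) \<and>
    (\<forall>A B D E f g h. f \<in> hom C A B \<longrightarrow> g \<in> hom C B D \<longrightarrow> h \<in> hom C D E \<longrightarrow>
        cmp C (cmp C f g) h = cmp C f (cmp C g h))"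

definition symmetric_monoidal :: bool where
  "symmetric_monoidal \<longleftrightarrow>
    (
    \<comment> \<open>tensor is a bifunctor\<close>
    (\<forall>A B D E f g. f \<in> hom C A B \<longrightarrow> g \<in> hom C D E \<longrightarrow> (f \<otimes>\<^sub>m g) \<in> hom C (A \<otimes> D) (B \<otimes> E)) \<and>
    (\<forall>A B. (iC A \<otimes>\<^sub>m iC B) = iC (A \<otimes> B)) \<and>
    (\<forall>A B B' D E E' f f' g g'. f \<in> hom C A B \<longrightarrow> f' \<in> hom C B B' \<longrightarrow>
        g \<in> hom C D E \<longrightarrow> g' \<in> hom C E E' \<longrightarrow>
        ((f ;; f') \<otimes>\<^sub>m (g ;; g')) = ((f \<otimes>\<^sub>m g) ;; (f' \<otimes>\<^sub>m g'))) \<and>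
    \<comment> \<open>structure isomorphisms\<close>
    (\<forall>A B D. is_iso C (asc C A B D) ((A \<otimes> B) \<otimes> D) (A \<otimes> (B \<otimes> D))) \<and>
    (\<forall>A. is_iso C (lu C A) (KC \<otimes> A) A) \<and>
    (\<forall>A. is_iso C (ru C A) (A \<otimes> KC) A) \<and>
    (\<forall>A B. symm C A B \<in> hom C (A \<otimes> B) (B \<otimes> A)) \<and>
    (\<forall>A B. (symm C A B ;; symm C B A) = iC (A \<otimes> B)) \<and>
    \<comment> \<open>naturality\<close>
    (\<forall>A A' B B' D D' f g h. f \<in> hom C A A' \<longrightarrow> g \<in> hom C B B' \<longrightarrow> h \<in> hom C D D' \<longrightarrow>
        (((f \<otimes>\<^sub>m g) \<otimes>\<^sub>m h) ;; asc C A' B' D') = (asc C A B D ;; (f \<otimes>\<^sub>m (g \<otimes>\<^sub>m h)))) \<and>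
    (\<forall>A B f. f \<in> hom C A B \<longrightarrow> ((iC KC \<otimes>\<^sub>m f) ;; lu C B) = (lu C A ;; f)) \<and>
    (\<forall>A B f. f \<in> hom C A B \<longrightarrow> ((f \<otimes>\<^sub>m iC KC) ;; ru C B) = (ru C A ;; f)) \<and>
    (\<forall>A B D E f g. f \<in> hom C A B \<longrightarrow> g \<in> hom C D E \<longrightarrow>
        ((f \<otimes>\<^sub>m g) ;; symm C B E) = (symm C A D ;; (g \<otimes>\<^sub>m f))) \<and>
    \<comment> \<open>pentagon, triangle, hexagon\<close>
    (\<forall>A B D E. (asc C (A \<otimes> B) D E ;; asc C A B (D \<otimes> E)) =
        ((asc C A B D \<otimes>\<^sub>m iC E) ;; asc C A (B \<otimes> D) E ;; (iC A \<otimes>\<^sub>m asc C B D E))) \<and>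
    (\<forall>A B. (asc C A KC B ;; (iC A \<otimes>\<^sub>m lu C B)) = (ru C A \<otimes>\<^sub>m iC B)) \<and>
    (\<forall>A B D. (asc C A B D ;; symm C A (B \<otimes> D) ;; asc C B D A) =
        ((symm C A B \<otimes>\<^sub>m iC D) ;; asc C B A D ;; (iC B \<otimes>\<^sub>m symm C A D))))"

definition additive :: bool where
  "additive \<longleftrightarrow>
    (
    (\<forall>A B. zC A B \<in> hom C A B) \<and>
    (\<forall>A B f g. f \<in> hom C A B \<longrightarrow> g \<in> hom C A B \<longrightarrow> (f +\<^sub>m g) \<in> hom C A B) \<and>
    (\<forall>A B f g h. f \<in> hom C A B \<longrightarrow> g \<in> hom C A B \<longrightarrow> h \<in> hom C A B \<longrightarrow>
        ((f +\<^sub>m g) +\<^sub>m h) = (f +\<^sub>m (g +\<^sub>m h))) \<and>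
    (\<forall>A B f g. f \<in> hom C A B \<longrightarrow> g \<in> hom C A B \<longrightarrow> (f +\<^sub>m g) = (g +\<^sub>m f)) \<and>
    (\<forall>A B f. f \<in> hom C A B \<longrightarrow> (f +\<^sub>m zC A B) = f) \<and>
    \<comment> \<open>composition preserves sums and zeros in each argument\<close>
    (\<forall>A B D f g h. f \<in> hom C A B \<longrightarrow> g \<in> hom C B D \<longrightarrow> h \<in> hom C B D \<longrightarrow>
        (f ;; (g +\<^sub>m h)) = ((f ;; g) +\<^sub>m (f ;; h))) \<and>
    (\<forall>A B D f g h. f \<in> hom C A B \<longrightarrow> g \<in> hom C A B \<longrightarrow> h \<in> hom C B D \<longrightarrow>
        ((f +\<^sub>m g) ;; h) = ((f ;; h) +\<^sub>m (g ;; h))) \<and>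
    (\<forall>A B D f. f \<in> hom C A B \<longrightarrow> (f ;; zC B D) = zC A D) \<and>
    (\<forall>A B D f. f \<in> hom C B D \<longrightarrow> (zC A B ;; f) = zC A D) \<and>
    \<comment> \<open>tensor preserves sums and zeros in each argument\<close>
    (\<forall>A B D E f g h. f \<in> hom C A B \<longrightarrow> g \<in> hom C D E \<longrightarrow> h \<in> hom C D E \<longrightarrow>
        (f \<otimes>\<^sub>m (g +\<^sub>m h)) = ((f \<otimes>\<^sub>m g) +\<^sub>m (f \<otimes>\<^sub>m h))) \<and>
    (\<forall>A B D E f g h. f \<in> hom C A B \<longrightarrow> g \<in> hom C A B \<longrightarrow> h \<in> hom C D E \<longrightarrow>
        ((f +\<^sub>m g) \<otimes>\<^sub>m h) = ((f \<otimes>\<^sub>m h) +\<^sub>m (g \<otimes>\<^sub>m h))) \<and>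
    (\<forall>A B D E f. f \<in> hom C A B \<longrightarrow> (f \<otimes>\<^sub>m zC D E) = zC (A \<otimes> D) (B \<otimes> E)) \<and>
    (\<forall>A B D E f. f \<in> hom C D E \<longrightarrow> (zC A B \<otimes>\<^sub>m f) = zC (A \<otimes> D) (B \<otimes> E)))"

definition additive_smc :: bool where
  "additive_smc \<longleftrightarrow> category \<and> symmetric_monoidal \<and> additive"

definition interchange :: "'o \<Rightarrow> 'o \<Rightarrow> 'o \<Rightarrow> 'o \<Rightarrow> 'm" where
  "interchange W X Y Z =
     (
      asc C W X (Y \<otimes> Z) ;; (iC W \<otimes>\<^sub>m cinv C (asc C X Y Z)) ;;
      (iC W \<otimes>\<^sub>m (symm C X Y \<otimes>\<^sub>m iC Z)) ;; (iC W \<otimes>\<^sub>m asc C Y X Z) ;;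
      cinv C (asc C W Y (X \<otimes> Z)))"

definition bimonoid :: "'o \<Rightarrow> 'm \<Rightarrow> 'm \<Rightarrow> 'm \<Rightarrow> 'm \<Rightarrow> bool" where
  "bimonoid X mu u d e \<longleftrightarrow>
    (
    mu \<in> hom C (X \<otimes> X) X \<and> u \<in> hom C KC X \<and> d \<in> hom C X (X \<otimes> X) \<and> e \<in> hom C X KC \<and>
    \<comment> \<open>monoid\<close>
    ((mu \<otimes>\<^sub>m iC X) ;; mu) = (asc C X X X ;; (iC X \<otimes>\<^sub>m mu) ;; mu) \<and>
    ((u \<otimes>\<^sub>m iC X) ;; mu) = lu C X \<and>
    ((iC X \<otimes>\<^sub>m u) ;; mu) = ru C X \<and>
    \<comment> \<open>comonoid\<close>
    (d ;; (d \<otimes>\<^sub>m iC X) ;; asc C X X X) = (d ;; (iC X \<otimes>\<^sub>m d)) \<and>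
    (d ;; (e \<otimes>\<^sub>m iC X) ;; lu C X) = iC X \<and>
    (d ;; (iC X \<otimes>\<^sub>m e) ;; ru C X) = iC X \<and>
    \<comment> \<open>compatibility\<close>
    (mu ;; d) = ((d \<otimes>\<^sub>m d) ;; interchange X X X X ;; (mu \<otimes>\<^sub>m mu)) \<and>
    (u ;; d) = (cinv C (ru C KC) ;; (u \<otimes>\<^sub>m u)) \<and>
    (mu ;; e) = ((e \<otimes>\<^sub>m e) ;; lu C KC) \<and>
    (u ;; e) = iC KC)"

definition hopf_monoid :: "'o \<Rightarrow> 'm \<Rightarrow> 'm \<Rightarrow> 'm \<Rightarrow> 'm \<Rightarrow> 'm \<Rightarrow> bool" where
  "hopf_monoid X mu u d e S \<longleftrightarrow>
    bimonoid X mu u d e \<and> S \<in> hom C X X \<and>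
    cmp C (cmp C d (tenm C (idt C X) S)) mu = cmp C e u \<and>
    cmp C (cmp C d (tenm C S (idt C X))) mu = cmp C e u"

definition cocommutative_hopf_monoid ::
  "'o \<Rightarrow> 'm \<Rightarrow> 'm \<Rightarrow> 'm \<Rightarrow> 'm \<Rightarrow> 'm \<Rightarrow> bool" where
  "cocommutative_hopf_monoid X mu u d e S \<longleftrightarrow>
    hopf_monoid X mu u d e S \<and> cmp C d (symm C X X) = d"

end

definition has_negatives :: "('o,'m,'x) asmc_scheme \<Rightarrow> bool" where
  "has_negatives C \<longleftrightarrow>
    (\<forall>A B. \<forall>f \<in> hom C A B. \<exists>g \<in> hom C A B. addm C f g = zerm C A B)"

record ('o,'m) mcm =
  bang :: "'o \<Rightarrow> 'o"
  bangm :: "'m \<Rightarrow> 'm"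
  dlt :: "'o \<Rightarrow> 'm"
  eps :: "'o \<Rightarrow> 'm"
  mon :: "'o \<Rightarrow> 'o \<Rightarrow> 'm"    (* !A\<otimes>!B \<rightarrow> !(A\<otimes>B) *)
  monK :: 'm
  cop :: "'o \<Rightarrow> 'm"
  cou :: "'o \<Rightarrow> 'm"

context
  fixes C :: "('o,'m,'x) asmc_scheme" and M :: "('o,'m,'y) mcm_scheme"
begin

abbreviation (input) cmpC' (infixl ";;" 55) where "f ;; g \<equiv> cmp C f g"
abbreviation (input) tenC' (infixr "\<otimes>" 70) where "A \<otimes> B \<equiv> ten C A B"
abbreviation (input) tenmC' (infixr "\<otimes>\<^sub>m" 70) where "f \<otimes>\<^sub>m g \<equiv> tenm C f g"
abbreviation (input) KC' where "KC' \<equiv> unitK C"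
abbreviation (input) iC' where "iC' \<equiv> idt C"
abbreviation (input) bM where "bM \<equiv> bang M"
abbreviation (input) bmM where "bmM \<equiv> bangm M"
abbreviation (input) dM where "dM \<equiv> dlt M"
abbreviation (input) epsM where "epsM \<equiv> eps M"
abbreviation (input) mM where "mM \<equiv> mon M"
abbreviation (input) mKM where "mKM \<equiv> monK M"
abbreviation (input) DM where "DM \<equiv> cop M"
abbreviation (input) eM where "eM \<equiv> cou M"

definition monoidal_coalgebra_modality ::
  bool where
  "monoidal_coalgebra_modality \<longleftrightarrow>
    (
    \<comment> \<open>! is a functor\<close>
    (\<forall>A B f. f \<in> hom C A B \<longrightarrow> bmM f \<in> hom C (bM A) (bM B)) \<and>
    (\<forall>A. bmM (iC' A) = iC' (bM A)) \<and>
    (\<forall>A B D f g. f \<in> hom C A B \<longrightarrow> g \<in> hom C B D \<longrightarrow> bmM (f ;; g) = (bmM f ;; bmM g)) \<and>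
    \<comment> \<open>comonad\<close>
    (\<forall>A. dM A \<in> hom C (bM A) (bM (bM A)) \<and> epsM A \<in> hom C (bM A) A) \<and>
    (\<forall>A B f. f \<in> hom C A B \<longrightarrow> (bmM f ;; dM B) = (dM A ;; bmM (bmM f))) \<and>
    (\<forall>A B f. f \<in> hom C A B \<longrightarrow> (bmM f ;; epsM B) = (epsM A ;; f)) \<and>
    (\<forall>A. (dM A ;; epsM (bM A)) = iC' (bM A)) \<and>
    (\<forall>A. (dM A ;; bmM (epsM A)) = iC' (bM A)) \<and>
    (\<forall>A. (dM A ;; dM (bM A)) = (dM A ;; bmM (dM A))) \<and>
    \<comment> \<open>symmetric (lax) monoidal functor structure\<close>
    (\<forall>A B. mM A B \<in> hom C (bM A \<otimes> bM B) (bM (A \<otimes> B))) \<and>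
    mKM \<in> hom C KC' (bM KC') \<and>
    (\<forall>A B D E f g. f \<in> hom C A B \<longrightarrow> g \<in> hom C D E \<longrightarrow>
        ((bmM f \<otimes>\<^sub>m bmM g) ;; mM B E) = (mM A D ;; bmM (f \<otimes>\<^sub>m g))) \<and>
    (\<forall>A B D. (asc C (bM A) (bM B) (bM D) ;; (iC' (bM A) \<otimes>\<^sub>m mM B D) ;; mM A (B \<otimes> D)) =
        ((mM A B \<otimes>\<^sub>m iC' (bM D)) ;; mM (A \<otimes> B) D ;; bmM (asc C A B D))) \<and>
    (\<forall>A. ((mKM \<otimes>\<^sub>m iC' (bM A)) ;; mM KC' A ;; bmM (lu C A)) = lu C (bM A)) \<and>
    (\<forall>A. ((iC' (bM A) \<otimes>\<^sub>m mKM) ;; mM A KC' ;; bmM (ru C A)) = ru C (bM A)) \<and>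
    (\<forall>A B. (symm C (bM A) (bM B) ;; mM B A) = (mM A B ;; bmM (symm C A B))) \<and>
    \<comment> \<open>dM and epsM are monoidal transformations\<close>
    (\<forall>A B. (mM A B ;; epsM (A \<otimes> B)) = (epsM A \<otimes>\<^sub>m epsM B)) \<and>
    (mKM ;; epsM KC') = iC' KC' \<and>
    (\<forall>A B. (mM A B ;; dM (A \<otimes> B)) = ((dM A \<otimes>\<^sub>m dM B) ;; mM (bM A) (bM B) ;; bmM (mM A B))) \<and>
    (mKM ;; dM KC') = (mKM ;; bmM mKM) \<and>
    \<comment> \<open>natural cocommutative comonoids\<close>
    (\<forall>A. DM A \<in> hom C (bM A) (bM A \<otimes> bM A) \<and> eM A \<in> hom C (bM A) KC') \<and>
    (\<forall>A. (DM A ;; (DM A \<otimes>\<^sub>m iC' (bM A)) ;; asc C (bM A) (bM A) (bM A)) = (DM A ;; (iC' (bM A) \<otimes>\<^sub>m DM A))) \<and>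
    (\<forall>A. (DM A ;; (eM A \<otimes>\<^sub>m iC' (bM A)) ;; lu C (bM A)) = iC' (bM A)) \<and>
    (\<forall>A. (DM A ;; (iC' (bM A) \<otimes>\<^sub>m eM A) ;; ru C (bM A)) = iC' (bM A)) \<and>
    (\<forall>A. (DM A ;; symm C (bM A) (bM A)) = DM A) \<and>
    (\<forall>A B f. f \<in> hom C A B \<longrightarrow> (bmM f ;; DM B) = (DM A ;; (bmM f \<otimes>\<^sub>m bmM f))) \<and>
    (\<forall>A B f. f \<in> hom C A B \<longrightarrow> (bmM f ;; eM B) = eM A) \<and>
    \<comment> \<open>dM is a comonoid morphism\<close>
    (\<forall>A. (dM A ;; DM (bM A)) = (DM A ;; (dM A \<otimes>\<^sub>m dM A))) \<and>
    (\<forall>A. (dM A ;; eM (bM A)) = eM A) \<and>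
    \<comment> \<open>DM and eM are monoidal transformations\<close>
    (\<forall>A B. (mM A B ;; DM (A \<otimes> B)) =
        ((DM A \<otimes>\<^sub>m DM B) ;; interchange C (bM A) (bM A) (bM B) (bM B) ;; (mM A B \<otimes>\<^sub>m mM A B))) \<and>
    (mKM ;; DM KC') = (cinv C (ru C KC') ;; (mKM \<otimes>\<^sub>m mKM)) \<and>
    (\<forall>A B. (mM A B ;; eM (A \<otimes> B)) = ((eM A \<otimes>\<^sub>m eM B) ;; lu C KC')) \<and>
    (mKM ;; eM KC') = iC' KC' \<and>
    \<comment> \<open>DM and eM are !-coalgebra morphisms\<close>
    (\<forall>A. (dM A ;; bmM (DM A)) = (DM A ;; (dM A \<otimes>\<^sub>m dM A) ;; mM (bM A) (bM A))) \<and>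
    (\<forall>A. (dM A ;; bmM (eM A)) = (eM A ;; mKM)))"

definition nabla :: "'o \<Rightarrow> 'm" where
  "nabla A =
    (
     (dlt M A \<otimes>\<^sub>m dlt M A) ;; mon M (bang M A) (bang M A) ;;
     bangm M (addm C ((eps M A \<otimes>\<^sub>m cou M A) ;; ru C A) ((cou M A \<otimes>\<^sub>m eps M A) ;; lu C A)))"

definition unitm :: "'o \<Rightarrow> 'm" where
  "unitm A = cmp C (monK M) (bangm M (zerm C (unitK C) A))"

end

end

theory Submission
  imports Defs
begin

text \<open>If every map has a negative, \<open>S\<^sub>A = !(-1\<^sub>A)\<close> is an antipode. All bimonoid and
  antipode laws for \<open>!A\<close> are equations between maps of \<open>!\<close>-coalgebras into the cofree coalgebra
  \<open>(!A, \<delta>\<^sub>A)\<close>, and such maps are determined by their composite with \<open>\<epsilon>\<^sub>A\<close>; after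
  composing with \<open>\<epsilon>\<^sub>A\<close> the antipode equation reduces to \<open>\<epsilon>\<^sub>A + \<epsilon>\<^sub>A;(-1\<^sub>A) = 0\<close>.
  Conversely, composing the antipode equation of \<open>!K\<close> with \<open>m\<^sub>K\<close> on the left and \<open>\<epsilon>\<^sub>K\<close> on
  the right yields a negative of \<open>1\<^sub>K\<close>, and tensoring with it negates every map.\<close>

locale additive_symmetric_monoidal =
  fixes C :: "('o,'m) asmc"
  assumes additive_smc: "additive_smc C"
begin

abbreviation arr :: "'m \<Rightarrow> bool" where "arr f \<equiv> f \<in> Arr C"
abbreviation src :: "'m \<Rightarrow> 'o" where "src f \<equiv> Dom C f"
abbreviation tgt :: "'m \<Rightarrow> 'o" where "tgt f \<equiv> Cod C f"
abbreviation dcomp (infixl "\<cdot>" 55) where "f \<cdot> g \<equiv> cmp C f g"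
abbreviation tensor_obj (infixr "\<odot>" 70) where "A \<odot> B \<equiv> ten C A B"
abbreviation tensor (infixr "\<otimes>" 70) where "f \<otimes> g \<equiv> tenm C f g"
abbreviation madd (infixl "\<oplus>" 65) where "f \<oplus> g \<equiv> addm C f g"
abbreviation K where "K \<equiv> unitK C"

lemma hom_iff: "f \<in> hom C A B \<longleftrightarrow> arr f \<and> src f = A \<and> tgt f = B"
  by (auto simp: hom_def)

lemmas category_axioms =
  additive_smc[unfolded additive_smc_def category_def hom_iff, THEN conjunct1]
lemmas monoidal_axioms =
  additive_smc[unfolded additive_smc_def symmetric_monoidal_def hom_iff, THEN conjunct2, THEN conjunct1]
lemmas additive_axioms =
  additive_smc[unfolded additive_smc_def additive_def hom_iff, THEN conjunct2, THEN conjunct2]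

lemma arr_idt [simp]: "arr (idt C A)"
  and src_idt [simp]: "src (idt C A) = A"
  and tgt_idt [simp]: "tgt (idt C A) = A"
  using category_axioms by blast+

lemma arr_comp [simp]: "arr f \<Longrightarrow> arr g \<Longrightarrow> tgt f = src g \<Longrightarrow> arr (f \<cdot> g)"
  and src_comp [simp]: "arr f \<Longrightarrow> arr g \<Longrightarrow> tgt f = src g \<Longrightarrow> src (f \<cdot> g) = src f"
  and tgt_comp [simp]: "arr f \<Longrightarrow> arr g \<Longrightarrow> tgt f = src g \<Longrightarrow> tgt (f \<cdot> g) = tgt g"
  using category_axioms by blast+

lemma idt_comp [simp]: "arr f \<Longrightarrow> src f = A \<Longrightarrow> idt C A \<cdot> f = f"
  and comp_idt [simp]: "arr f \<Longrightarrow> tgt f = A \<Longrightarrow> f \<cdot> idt C A = f"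
  using category_axioms by blast+

lemma comp_assoc: "arr f \<Longrightarrow> arr g \<Longrightarrow> arr h \<Longrightarrow> tgt f = src g \<Longrightarrow> tgt g = src h \<Longrightarrow>
   (f \<cdot> g) \<cdot> h = f \<cdot> (g \<cdot> h)"
  using category_axioms by blast+

lemma is_iso_cinv:
  assumes "is_iso C f A B"
  shows "cinv C f \<in> hom C B A \<and> f \<cdot> cinv C f = idt C A \<and> cinv C f \<cdot> f = idt C B"
proof -
  obtain g where g: "g \<in> hom C B A" "f \<cdot> g = idt C A" "g \<cdot> f = idt C B" and f: "f \<in> hom C A B"
    using assms unfolding is_iso_def by blast
  have inverse_unique: "g' = g" if g': "g' \<in> hom C B A" "f \<cdot> g' = idt C A" "g' \<cdot> f = idt C B" for g'
  proof -
    have "g' = g' \<cdot> (f \<cdot> g)" using g' g(2) by (simp add: hom_iff)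
    also have "\<dots> = (g' \<cdot> f) \<cdot> g" using g' g f by (intro comp_assoc[symmetric]) (simp_all add: hom_iff)
    also have "\<dots> = g" using g' g by (simp add: hom_iff)
    finally show ?thesis .
  qed
  have "src f = A" "tgt f = B" using f by (simp_all add: hom_iff)
  then have "cinv C f = g"
    unfolding cinv_def using g inverse_unique by (intro the_equality) blast+
  then show ?thesis using g by simp
qed

lemma arr_tensor [simp]: "arr f \<Longrightarrow> arr g \<Longrightarrow> arr (f \<otimes> g)"
  and src_tensor [simp]: "arr f \<Longrightarrow> arr g \<Longrightarrow> src (f \<otimes> g) = src f \<odot> src g"
  and tgt_tensor [simp]: "arr f \<Longrightarrow> arr g \<Longrightarrow> tgt (f \<otimes> g) = tgt f \<odot> tgt g"
  using monoidal_axioms by metis+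

lemma tensor_idt [simp]: "idt C A \<otimes> idt C B = idt C (A \<odot> B)"
  using monoidal_axioms by metis+

lemma tensor_comp: "arr f \<Longrightarrow> arr f' \<Longrightarrow> arr g \<Longrightarrow> arr g' \<Longrightarrow> tgt f = src f' \<Longrightarrow> tgt g = src g' \<Longrightarrow>
   (f \<cdot> f') \<otimes> (g \<cdot> g') = (f \<otimes> g) \<cdot> (f' \<otimes> g')"
  using monoidal_axioms by metis+

lemma is_iso_asc: "is_iso C (asc C A B D) ((A \<odot> B) \<odot> D) (A \<odot> (B \<odot> D))"
  and is_iso_lu: "is_iso C (lu C A) (K \<odot> A) A"
  and is_iso_ru: "is_iso C (ru C A) (A \<odot> K) A"
  using monoidal_axioms by metis+

lemma asc_typing [simp]:
  "arr (asc C A B D)" "src (asc C A B D) = (A \<odot> B) \<odot> D" "tgt (asc C A B D) = A \<odot> (B \<odot> D)"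
  "arr (cinv C (asc C A B D))" "src (cinv C (asc C A B D)) = A \<odot> (B \<odot> D)"
  "tgt (cinv C (asc C A B D)) = (A \<odot> B) \<odot> D"
  and asc_cinv [simp]:
  "asc C A B D \<cdot> cinv C (asc C A B D) = idt C ((A \<odot> B) \<odot> D)"
  "cinv C (asc C A B D) \<cdot> asc C A B D = idt C (A \<odot> (B \<odot> D))"
  using is_iso_asc is_iso_cinv[OF is_iso_asc] by (auto simp: is_iso_def hom_iff)

lemma lu_typing [simp]:
  "arr (lu C A)" "src (lu C A) = K \<odot> A" "tgt (lu C A) = A"
  "arr (cinv C (lu C A))" "src (cinv C (lu C A)) = A" "tgt (cinv C (lu C A)) = K \<odot> A"
  and lu_cinv [simp]: "lu C A \<cdot> cinv C (lu C A) = idt C (K \<odot> A)" "cinv C (lu C A) \<cdot> lu C A = idt C A"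
  using is_iso_lu is_iso_cinv[OF is_iso_lu] by (auto simp: is_iso_def hom_iff)

lemma ru_typing [simp]:
  "arr (ru C A)" "src (ru C A) = A \<odot> K" "tgt (ru C A) = A"
  "arr (cinv C (ru C A))" "src (cinv C (ru C A)) = A" "tgt (cinv C (ru C A)) = A \<odot> K"
  and ru_cinv [simp]: "ru C A \<cdot> cinv C (ru C A) = idt C (A \<odot> K)" "cinv C (ru C A) \<cdot> ru C A = idt C A"
  using is_iso_ru is_iso_cinv[OF is_iso_ru] by (auto simp: is_iso_def hom_iff)

lemma symm_typing [simp]: "arr (symm C A B)" "src (symm C A B) = A \<odot> B" "tgt (symm C A B) = B \<odot> A"
  using monoidal_axioms by metis+

lemma asc_natural: "arr f \<Longrightarrow> arr g \<Longrightarrow> arr h \<Longrightarrow>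
   ((f \<otimes> g) \<otimes> h) \<cdot> asc C (tgt f) (tgt g) (tgt h) = asc C (src f) (src g) (src h) \<cdot> (f \<otimes> (g \<otimes> h))"
  using monoidal_axioms by metis+

lemma lu_natural: "arr f \<Longrightarrow> (idt C K \<otimes> f) \<cdot> lu C (tgt f) = lu C (src f) \<cdot> f"
  using monoidal_axioms by metis+

lemma ru_natural: "arr f \<Longrightarrow> (f \<otimes> idt C K) \<cdot> ru C (tgt f) = ru C (src f) \<cdot> f"
  using monoidal_axioms by metis+

lemma symm_natural: "arr f \<Longrightarrow> arr g \<Longrightarrow> (f \<otimes> g) \<cdot> symm C (tgt f) (tgt g) = symm C (src f) (src g) \<cdot> (g \<otimes> f)"
  using monoidal_axioms by metis+

lemma pentagon: "asc C (A \<odot> B) D E \<cdot> asc C A B (D \<odot> E) =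
    (asc C A B D \<otimes> idt C E) \<cdot> asc C A (B \<odot> D) E \<cdot> (idt C A \<otimes> asc C B D E)"
  using monoidal_axioms by metis+

lemma triangle: "asc C A K B \<cdot> (idt C A \<otimes> lu C B) = ru C A \<otimes> idt C B"
  using monoidal_axioms by metis+

lemma arr_zerm [simp]: "arr (zerm C A B)" and src_zerm [simp]: "src (zerm C A B) = A"
  and tgt_zerm [simp]: "tgt (zerm C A B) = B"
  using additive_axioms by metis+

lemma arr_madd [simp]: "arr f \<Longrightarrow> arr g \<Longrightarrow> src f = src g \<Longrightarrow> tgt f = tgt g \<Longrightarrow> arr (f \<oplus> g)"
  and src_madd [simp]: "arr f \<Longrightarrow> arr g \<Longrightarrow> src f = src g \<Longrightarrow> tgt f = tgt g \<Longrightarrow> src (f \<oplus> g) = src f"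
  and tgt_madd [simp]: "arr f \<Longrightarrow> arr g \<Longrightarrow> src f = src g \<Longrightarrow> tgt f = tgt g \<Longrightarrow> tgt (f \<oplus> g) = tgt f"
  using additive_axioms by metis+

lemma madd_assoc: "arr f \<Longrightarrow> arr g \<Longrightarrow> arr h \<Longrightarrow> src f = src g \<Longrightarrow> tgt f = tgt g \<Longrightarrow>
   src h = src f \<Longrightarrow> tgt h = tgt f \<Longrightarrow> (f \<oplus> g) \<oplus> h = f \<oplus> (g \<oplus> h)"
  using additive_axioms by metis+

lemma madd_commute: "arr f \<Longrightarrow> arr g \<Longrightarrow> src f = src g \<Longrightarrow> tgt f = tgt g \<Longrightarrow> f \<oplus> g = g \<oplus> f"
  using additive_axioms by metis+

lemma madd_zerm [simp]: "arr f \<Longrightarrow> src f = A \<Longrightarrow> tgt f = B \<Longrightarrow> f \<oplus> zerm C A B = f"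
  using additive_axioms by metis+

lemma zerm_madd [simp]: "arr f \<Longrightarrow> src f = A \<Longrightarrow> tgt f = B \<Longrightarrow> zerm C A B \<oplus> f = f"
  using madd_commute[of f "zerm C A B"] by simp

lemma comp_madd: "arr f \<Longrightarrow> arr g \<Longrightarrow> arr h \<Longrightarrow> tgt f = src g \<Longrightarrow> src h = src g \<Longrightarrow> tgt h = tgt g \<Longrightarrow>
   f \<cdot> (g \<oplus> h) = (f \<cdot> g) \<oplus> (f \<cdot> h)"
  using additive_axioms by metis+

lemma madd_comp: "arr f \<Longrightarrow> arr g \<Longrightarrow> arr h \<Longrightarrow> src f = src g \<Longrightarrow> tgt f = tgt g \<Longrightarrow> tgt f = src h \<Longrightarrow>
   (f \<oplus> g) \<cdot> h = (f \<cdot> h) \<oplus> (g \<cdot> h)"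
  using additive_axioms by metis+

lemma comp_zerm [simp]: "arr f \<Longrightarrow> tgt f = B \<Longrightarrow> f \<cdot> zerm C B D = zerm C (src f) D"
  using additive_axioms by metis+

lemma zerm_comp [simp]: "arr f \<Longrightarrow> src f = B \<Longrightarrow> zerm C A B \<cdot> f = zerm C A (tgt f)"
  using additive_axioms by metis+

lemma tensor_madd: "arr f \<Longrightarrow> arr g \<Longrightarrow> arr h \<Longrightarrow> src h = src g \<Longrightarrow> tgt h = tgt g \<Longrightarrow>
   f \<otimes> (g \<oplus> h) = (f \<otimes> g) \<oplus> (f \<otimes> h)"
  using additive_axioms by metis+

lemma madd_tensor: "arr f \<Longrightarrow> arr g \<Longrightarrow> arr h \<Longrightarrow> src f = src g \<Longrightarrow> tgt f = tgt g \<Longrightarrow>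
   (f \<oplus> g) \<otimes> h = (f \<otimes> h) \<oplus> (g \<otimes> h)"
  using additive_axioms by metis+

lemma tensor_zerm [simp]: "arr f \<Longrightarrow> f \<otimes> zerm C A B = zerm C (src f \<odot> A) (tgt f \<odot> B)"
  using additive_axioms by metis+

lemma zerm_tensor [simp]: "arr f \<Longrightarrow> zerm C A B \<otimes> f = zerm C (A \<odot> src f) (B \<odot> tgt f)"
  using additive_axioms by metis+

lemma left_invertible_cancel:
  assumes "P \<cdot> x = P \<cdot> y" and "Q \<cdot> P = idt C (src x)"
    and "arr Q" "arr P" "arr x" "arr y" "tgt Q = src P" "tgt P = src x" "src y = src x"
  shows "x = y"
proof -
  have "x = (Q \<cdot> P) \<cdot> x" using assms(2,5) by simp
  also have "\<dots> = Q \<cdot> (P \<cdot> x)" using assms(3-8) by (simp add: comp_assoc)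
  also have "\<dots> = Q \<cdot> (P \<cdot> y)" using assms(1) by simp
  also have "\<dots> = (Q \<cdot> P) \<cdot> y" using assms(3-9) by (simp add: comp_assoc)
  also have "\<dots> = y" using assms(2,6,9) by simp
  finally show ?thesis .
qed

lemma unit_tensor_cancel:
  assumes "arr f" "arr g" "src g = src f" "tgt g = tgt f" "idt C K \<otimes> f = idt C K \<otimes> g"
  shows "f = g"
proof -
  have "f = cinv C (lu C (src f)) \<cdot> ((idt C K \<otimes> f) \<cdot> lu C (tgt f))"
    using assms(1) by (simp add: lu_natural flip: comp_assoc)
  also have "\<dots> = cinv C (lu C (src f)) \<cdot> ((idt C K \<otimes> g) \<cdot> lu C (tgt f))" using assms(5) by simp
  also have "\<dots> = g" using assms(2-4) lu_natural[of g] by (simp flip: comp_assoc)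
  finally show ?thesis .
qed

lemma asc_tensor_asc_left_inverse:
  "(cinv C (asc C A (B \<odot> D) E) \<cdot> (cinv C (asc C A B D) \<otimes> idt C E)) \<cdot>
     ((asc C A B D \<otimes> idt C E) \<cdot> asc C A (B \<odot> D) E) = idt C (A \<odot> ((B \<odot> D) \<odot> E))"
proof -
  have "(cinv C (asc C A B D) \<otimes> idt C E) \<cdot> (asc C A B D \<otimes> idt C E) = idt C ((A \<odot> (B \<odot> D)) \<odot> E)"
    by (simp add: tensor_comp[symmetric])
  then show ?thesis by (simp add: comp_assoc comp_assoc[symmetric, of "cinv C (asc C A B D) \<otimes> idt C E"])
qed

text \<open>Kelly's coherence lemma: tensored with \<open>K\<close> on the left, both sides become equal by
  the pentagon and the triangle, and \<open>K \<otimes> -\<close> is faithful.\<close>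

lemma asc_unit_lu: "asc C K B E \<cdot> lu C (B \<odot> E) = lu C B \<otimes> idt C E"
proof -
  define P where "P = (asc C K K B \<otimes> idt C E) \<cdot> asc C K (K \<odot> B) E"
  have P_typing: "arr P" "src P = ((K \<odot> K) \<odot> B) \<odot> E" "tgt P = K \<odot> ((K \<odot> B) \<odot> E)"
    unfolding P_def by simp_all
  have "P \<cdot> (idt C K \<otimes> (asc C K B E \<cdot> lu C (B \<odot> E)))
      = P \<cdot> ((idt C K \<otimes> asc C K B E) \<cdot> (idt C K \<otimes> lu C (B \<odot> E)))"
    by (simp add: tensor_comp[symmetric])
  also have "\<dots> = (asc C (K \<odot> K) B E \<cdot> asc C K K (B \<odot> E)) \<cdot> (idt C K \<otimes> lu C (B \<odot> E))"
    unfolding P_def by (simp add: pentagon comp_assoc)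
  also have "\<dots> = asc C (K \<odot> K) B E \<cdot> (ru C K \<otimes> (idt C B \<otimes> idt C E))"
    by (simp add: comp_assoc triangle)
  also have "\<dots> = ((ru C K \<otimes> idt C B) \<otimes> idt C E) \<cdot> asc C K B E"
    using asc_natural[of "ru C K" "idt C B" "idt C E"] by simp
  also have "\<dots> = ((asc C K K B \<cdot> (idt C K \<otimes> lu C B)) \<otimes> (idt C E \<cdot> idt C E)) \<cdot> asc C K B E"
    by (simp add: triangle)
  also have "\<dots> = ((asc C K K B \<otimes> idt C E) \<cdot> ((idt C K \<otimes> lu C B) \<otimes> idt C E)) \<cdot> asc C K B E"
    by (simp add: tensor_comp[symmetric])
  also have "\<dots> = P \<cdot> (idt C K \<otimes> (lu C B \<otimes> idt C E))"
  proof -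
    have "((idt C K \<otimes> lu C B) \<otimes> idt C E) \<cdot> asc C K B E
        = asc C K (K \<odot> B) E \<cdot> (idt C K \<otimes> (lu C B \<otimes> idt C E))"
      using asc_natural[of "idt C K" "lu C B" "idt C E"] by simp
    then show ?thesis unfolding P_def by (simp add: comp_assoc)
  qed
  finally have "idt C K \<otimes> (asc C K B E \<cdot> lu C (B \<odot> E)) = idt C K \<otimes> (lu C B \<otimes> idt C E)"
    by (rule left_invertible_cancel
        [where Q = "cinv C (asc C K (K \<odot> B) E) \<cdot> (cinv C (asc C K K B) \<otimes> idt C E)"])
      (use asc_tensor_asc_left_inverse[of K K B E] P_typing in \<open>simp_all add: P_def\<close>)
  then show ?thesis by (rule unit_tensor_cancel[rotated -1]) simp_all
qed

lemma comp_eq_extend_right: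
  "a \<cdot> b = c \<cdot> d \<Longrightarrow> arr a \<Longrightarrow> arr b \<Longrightarrow> arr c \<Longrightarrow> arr d \<Longrightarrow> tgt a = src b \<Longrightarrow> tgt c = src d \<Longrightarrow>
   tgt d = tgt b \<Longrightarrow> arr x \<Longrightarrow> tgt b = src x \<Longrightarrow> a \<cdot> (b \<cdot> x) = c \<cdot> (d \<cdot> x)"
  by (metis comp_assoc)

lemma tensor_idt_comp_commute:
  assumes "arr f" "arr p" "arr q" "arr s" "arr s'" "tgt p = src s'" "src s = src p" "tgt s = src q"
    "p \<cdot> s' = s \<cdot> q"
  shows "(f \<otimes> p) \<cdot> (idt C (tgt f) \<otimes> s') = (idt C (src f) \<otimes> s) \<cdot> (f \<otimes> q)"
  using assms by (simp add: tensor_comp[symmetric])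

lemma cinv_asc_natural:
  assumes "arr g" "arr k" "arr l"
  shows "(g \<otimes> (k \<otimes> l)) \<cdot> cinv C (asc C (tgt g) (tgt k) (tgt l))
       = cinv C (asc C (src g) (src k) (src l)) \<cdot> ((g \<otimes> k) \<otimes> l)"
proof -
  let ?a = "asc C (src g) (src k) (src l)" and ?b = "asc C (tgt g) (tgt k) (tgt l)"
  have "(g \<otimes> (k \<otimes> l)) \<cdot> cinv C ?b = (cinv C ?a \<cdot> ?a) \<cdot> ((g \<otimes> (k \<otimes> l)) \<cdot> cinv C ?b)" using assms by simp
  also have "\<dots> = cinv C ?a \<cdot> (?a \<cdot> ((g \<otimes> (k \<otimes> l)) \<cdot> cinv C ?b))"
    by (rule comp_assoc) (use assms in simp_all)
  also have "?a \<cdot> ((g \<otimes> (k \<otimes> l)) \<cdot> cinv C ?b) = (?a \<cdot> (g \<otimes> (k \<otimes> l))) \<cdot> cinv C ?b"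
    by (rule comp_assoc[symmetric]) (use assms in simp_all)
  also have "?a \<cdot> (g \<otimes> (k \<otimes> l)) = ((g \<otimes> k) \<otimes> l) \<cdot> ?b" using assms by (simp add: asc_natural)
  also have "(((g \<otimes> k) \<otimes> l) \<cdot> ?b) \<cdot> cinv C ?b = ((g \<otimes> k) \<otimes> l) \<cdot> (?b \<cdot> cinv C ?b)"
    by (rule comp_assoc) (use assms in simp_all)
  also have "\<dots> = (g \<otimes> k) \<otimes> l" using assms by simp
  finally show ?thesis .
qed

lemma interchange_typing [simp]: "arr (interchange C W X Y Z)"
   "src (interchange C W X Y Z) = (W \<odot> X) \<odot> (Y \<odot> Z)"
   "tgt (interchange C W X Y Z) = (W \<odot> Y) \<odot> (X \<odot> Z)"
  unfolding interchange_def by simp_all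

lemma interchange_natural:
  assumes "arr f" "arr g" "arr k" "arr l"
  shows "((f \<otimes> g) \<otimes> (k \<otimes> l)) \<cdot> interchange C (tgt f) (tgt g) (tgt k) (tgt l)
       = interchange C (src f) (src g) (src k) (src l) \<cdot> ((f \<otimes> k) \<otimes> (g \<otimes> l))"
proof -
  have n1: "((f \<otimes> g) \<otimes> (k \<otimes> l)) \<cdot> asc C (tgt f) (tgt g) (tgt k \<odot> tgt l)
       = asc C (src f) (src g) (src k \<odot> src l) \<cdot> (f \<otimes> (g \<otimes> (k \<otimes> l)))"
    using asc_natural[of f g "k \<otimes> l"] assms by simp
  have n2: "(f \<otimes> (g \<otimes> (k \<otimes> l))) \<cdot> (idt C (tgt f) \<otimes> cinv C (asc C (tgt g) (tgt k) (tgt l)))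
       = (idt C (src f) \<otimes> cinv C (asc C (src g) (src k) (src l))) \<cdot> (f \<otimes> ((g \<otimes> k) \<otimes> l))"
    using assms cinv_asc_natural[of g k l] by (intro tensor_idt_comp_commute) simp_all
  have n3: "(f \<otimes> ((g \<otimes> k) \<otimes> l)) \<cdot> (idt C (tgt f) \<otimes> (symm C (tgt g) (tgt k) \<otimes> idt C (tgt l)))
       = (idt C (src f) \<otimes> (symm C (src g) (src k) \<otimes> idt C (src l))) \<cdot> (f \<otimes> ((k \<otimes> g) \<otimes> l))"
  proof (rule tensor_idt_comp_commute)
    show "((g \<otimes> k) \<otimes> l) \<cdot> (symm C (tgt g) (tgt k) \<otimes> idt C (tgt l))
        = (symm C (src g) (src k) \<otimes> idt C (src l)) \<cdot> ((k \<otimes> g) \<otimes> l)"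
      using assms symm_natural[of g k] by (simp add: tensor_comp[symmetric])
  qed (use assms in simp_all)
  have n4: "(f \<otimes> ((k \<otimes> g) \<otimes> l)) \<cdot> (idt C (tgt f) \<otimes> asc C (tgt k) (tgt g) (tgt l))
       = (idt C (src f) \<otimes> asc C (src k) (src g) (src l)) \<cdot> (f \<otimes> (k \<otimes> (g \<otimes> l)))"
    using assms asc_natural[of k g l] by (intro tensor_idt_comp_commute) simp_all
  have n5: "(f \<otimes> (k \<otimes> (g \<otimes> l))) \<cdot> cinv C (asc C (tgt f) (tgt k) (tgt g \<odot> tgt l))
       = cinv C (asc C (src f) (src k) (src g \<odot> src l)) \<cdot> ((f \<otimes> k) \<otimes> (g \<otimes> l))"
    using assms cinv_asc_natural[of f k "g \<otimes> l"] by simp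
  show ?thesis unfolding interchange_def using assms
    by (simp add: comp_assoc n1 n5 comp_eq_extend_right[OF n1] comp_eq_extend_right[OF n2]
        comp_eq_extend_right[OF n3] comp_eq_extend_right[OF n4])
qed

lemma tensor_comp_factor_left:
  assumes "arr a" "arr b" "arr c" "arr r" "arr t" "src r = tgt a \<odot> tgt b" "src t = tgt r \<odot> tgt c"
  shows "(((a \<otimes> b) \<cdot> r) \<otimes> c) \<cdot> t = ((a \<otimes> b) \<otimes> c) \<cdot> ((r \<otimes> idt C (tgt c)) \<cdot> t)"
proof -
  have "((a \<otimes> b) \<cdot> r) \<otimes> c = ((a \<otimes> b) \<cdot> r) \<otimes> (c \<cdot> idt C (tgt c))" using assms by simp
  also have "\<dots> = ((a \<otimes> b) \<otimes> c) \<cdot> (r \<otimes> idt C (tgt c))" using assms by (intro tensor_comp) simp_all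
  finally have split: "((a \<otimes> b) \<cdot> r) \<otimes> c = ((a \<otimes> b) \<otimes> c) \<cdot> (r \<otimes> idt C (tgt c))" .
  show ?thesis unfolding split using assms by (intro comp_assoc) simp_all
qed

lemma asc_tensor_comp_factor_right:
  assumes "arr a" "arr b" "arr c" "arr r" "arr t" "src r = tgt b \<odot> tgt c" "src t = tgt a \<odot> tgt r"
  shows "asc C (src a) (src b) (src c) \<cdot> ((a \<otimes> ((b \<otimes> c) \<cdot> r)) \<cdot> t)
       = ((a \<otimes> b) \<otimes> c) \<cdot> (asc C (tgt a) (tgt b) (tgt c) \<cdot> ((idt C (tgt a) \<otimes> r) \<cdot> t))"
proof -
  have "a \<otimes> ((b \<otimes> c) \<cdot> r) = (a \<cdot> idt C (tgt a)) \<otimes> ((b \<otimes> c) \<cdot> r)" using assms by simp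
  also have "\<dots> = (a \<otimes> (b \<otimes> c)) \<cdot> (idt C (tgt a) \<otimes> r)" using assms by (intro tensor_comp) simp_all
  finally have split: "a \<otimes> ((b \<otimes> c) \<cdot> r) = (a \<otimes> (b \<otimes> c)) \<cdot> (idt C (tgt a) \<otimes> r)" .
  have "asc C (src a) (src b) (src c) \<cdot> ((a \<otimes> ((b \<otimes> c) \<cdot> r)) \<cdot> t)
      = (asc C (src a) (src b) (src c) \<cdot> (a \<otimes> (b \<otimes> c))) \<cdot> ((idt C (tgt a) \<otimes> r) \<cdot> t)"
    unfolding split using assms by (simp add: comp_assoc)
  also have "\<dots> = (((a \<otimes> b) \<otimes> c) \<cdot> asc C (tgt a) (tgt b) (tgt c)) \<cdot> ((idt C (tgt a) \<otimes> r) \<cdot> t)"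
    using assms asc_natural[of a b c] by simp
  also have "\<dots> = ((a \<otimes> b) \<otimes> c) \<cdot> (asc C (tgt a) (tgt b) (tgt c) \<cdot> ((idt C (tgt a) \<otimes> r) \<cdot> t))"
    using assms by (intro comp_assoc) simp_all
  finally show ?thesis .
qed

lemma ru_tensor_ru_asc:
  assumes "arr a" "arr b" "arr c" "tgt a = A" "tgt b = K" "tgt c = K"
  shows "(((a \<otimes> b) \<cdot> ru C A) \<otimes> c) \<cdot> ru C A
       = asc C (src a) (src b) (src c) \<cdot> ((a \<otimes> ((b \<otimes> c) \<cdot> lu C K)) \<cdot> ru C A)"
proof -
  have "(((a \<otimes> b) \<cdot> ru C A) \<otimes> c) \<cdot> ru C A = ((a \<otimes> b) \<otimes> c) \<cdot> ((ru C A \<otimes> idt C K) \<cdot> ru C A)"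
    using assms by (subst tensor_comp_factor_left) simp_all
  also have "\<dots> = ((a \<otimes> b) \<otimes> c) \<cdot> (asc C A K K \<cdot> ((idt C A \<otimes> lu C K) \<cdot> ru C A))"
    by (simp add: triangle[symmetric] comp_assoc)
  also have "\<dots> = asc C (src a) (src b) (src c) \<cdot> ((a \<otimes> ((b \<otimes> c) \<cdot> lu C K)) \<cdot> ru C A)"
    using assms asc_tensor_comp_factor_right[of a b c "lu C K" "ru C A"] by simp
  finally show ?thesis .
qed

lemma lu_tensor_ru_asc:
  assumes "arr a" "arr b" "arr c" "tgt a = K" "tgt b = A" "tgt c = K"
  shows "(((a \<otimes> b) \<cdot> lu C A) \<otimes> c) \<cdot> ru C A
       = asc C (src a) (src b) (src c) \<cdot> ((a \<otimes> ((b \<otimes> c) \<cdot> ru C A)) \<cdot> lu C A)"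
proof -
  have "(((a \<otimes> b) \<cdot> lu C A) \<otimes> c) \<cdot> ru C A = ((a \<otimes> b) \<otimes> c) \<cdot> ((lu C A \<otimes> idt C K) \<cdot> ru C A)"
    using assms by (subst tensor_comp_factor_left) simp_all
  also have "\<dots> = ((a \<otimes> b) \<otimes> c) \<cdot> (asc C K A K \<cdot> (lu C (A \<odot> K) \<cdot> ru C A))"
    by (simp add: asc_unit_lu[symmetric] comp_assoc)
  also have "\<dots> = ((a \<otimes> b) \<otimes> c) \<cdot> (asc C K A K \<cdot> ((idt C K \<otimes> ru C A) \<cdot> lu C A))"
    using lu_natural[of "ru C A"] by simp
  also have "\<dots> = asc C (src a) (src b) (src c) \<cdot> ((a \<otimes> ((b \<otimes> c) \<cdot> ru C A)) \<cdot> lu C A)"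
    using assms asc_tensor_comp_factor_right[of a b c "ru C A" "lu C A"] by simp
  finally show ?thesis .
qed

lemma lu_tensor_lu_asc:
  assumes "arr a" "arr b" "arr c" "tgt a = K" "tgt b = K" "tgt c = A"
  shows "(((a \<otimes> b) \<cdot> lu C K) \<otimes> c) \<cdot> lu C A
       = asc C (src a) (src b) (src c) \<cdot> ((a \<otimes> ((b \<otimes> c) \<cdot> lu C A)) \<cdot> lu C A)"
proof -
  have "(((a \<otimes> b) \<cdot> lu C K) \<otimes> c) \<cdot> lu C A = ((a \<otimes> b) \<otimes> c) \<cdot> ((lu C K \<otimes> idt C A) \<cdot> lu C A)"
    using assms by (subst tensor_comp_factor_left) simp_all
  also have "\<dots> = ((a \<otimes> b) \<otimes> c) \<cdot> (asc C K K A \<cdot> (lu C (K \<odot> A) \<cdot> lu C A))"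
    by (simp add: asc_unit_lu[symmetric] comp_assoc)
  also have "\<dots> = ((a \<otimes> b) \<otimes> c) \<cdot> (asc C K K A \<cdot> ((idt C K \<otimes> lu C A) \<cdot> lu C A))"
    using lu_natural[of "lu C A"] by simp
  also have "\<dots> = asc C (src a) (src b) (src c) \<cdot> ((a \<otimes> ((b \<otimes> c) \<cdot> lu C A)) \<cdot> lu C A)"
    using assms asc_tensor_comp_factor_right[of a b c "lu C A" "lu C A"] by simp
  finally show ?thesis .
qed

lemma negative_unique:
  assumes "arr f" "arr g" "arr g'" "src g = src f" "tgt g = tgt f" "src g' = src f" "tgt g' = tgt f"
    "f \<oplus> g = zerm C (src f) (tgt f)" "f \<oplus> g' = zerm C (src f) (tgt f)"
  shows "g = g'"
proof -
  have "g = g \<oplus> (f \<oplus> g')" using assms by simp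
  also have "\<dots> = (g \<oplus> f) \<oplus> g'" using assms by (simp add: madd_assoc)
  also have "g \<oplus> f = f \<oplus> g" using assms by (intro madd_commute) simp_all
  also have "(f \<oplus> g) \<oplus> g' = g'" using assms by simp
  finally show ?thesis .
qed

lemma negative_natural:
  assumes f: "arr f" "src f = A" "tgt f = B"
    and nA: "n A \<in> hom C A A" "idt C A \<oplus> n A = zerm C A A"
    and nB: "n B \<in> hom C B B" "idt C B \<oplus> n B = zerm C B B"
  shows "f \<cdot> n B = n A \<cdot> f"
proof (rule negative_unique[of f])
  have "f \<oplus> (f \<cdot> n B) = f \<cdot> (idt C B \<oplus> n B)" using f nB(1) by (simp add: comp_madd hom_iff)
  then show "f \<oplus> (f \<cdot> n B) = zerm C (src f) (tgt f)" using f nB(2) by simp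
  have "f \<oplus> (n A \<cdot> f) = (idt C A \<oplus> n A) \<cdot> f" using f nA(1) by (simp add: madd_comp hom_iff)
  then show "f \<oplus> (n A \<cdot> f) = zerm C (src f) (tgt f)" using f nA(2) by simp
qed (use f nA nB in \<open>simp_all add: hom_iff\<close>)

lemma has_negativesI_unit:
  assumes n: "n \<in> hom C K K" "idt C K \<oplus> n = zerm C K K"
  shows "has_negatives C"
  unfolding has_negatives_def
proof (intro allI ballI)
  fix A B f assume "f \<in> hom C A B"
  then have f: "arr f" "src f = A" "tgt f = B" by (auto simp: hom_iff)
  have n': "arr n" "src n = K" "tgt n = K" using n by (auto simp: hom_iff)
  define g where "g = cinv C (lu C A) \<cdot> ((n \<otimes> f) \<cdot> lu C B)"
  have "g \<in> hom C A B" unfolding g_def hom_iff using f n' by simp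
  have "f = cinv C (lu C A) \<cdot> ((idt C K \<otimes> f) \<cdot> lu C B)"
    using f lu_natural[of f] by (simp flip: comp_assoc)
  then have "f \<oplus> g = cinv C (lu C A) \<cdot> (((idt C K \<otimes> f) \<cdot> lu C B) \<oplus> ((n \<otimes> f) \<cdot> lu C B))"
    unfolding g_def using f n' by (simp add: comp_madd)
  also have "\<dots> = cinv C (lu C A) \<cdot> (((idt C K \<oplus> n) \<otimes> f) \<cdot> lu C B)"
    using f n' by (simp add: madd_comp madd_tensor)
  also have "\<dots> = zerm C A B" using f by (simp add: n)
  finally show "\<exists>g\<in>hom C A B. f \<oplus> g = zerm C A B" using \<open>g \<in> hom C A B\<close> by blast
qed

end

locale additive_coalgebra_modality = additive_symmetric_monoidal C
  for C :: "('o,'m) asmc" +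
  fixes M :: "('o,'m) mcm"
  assumes modality: "monoidal_coalgebra_modality C M"
begin

abbreviation bang_obj ("!_" [1000] 1000) where "!A \<equiv> bang M A"
abbreviation bang_map ("!\<^sub>m _" [1000] 1000) where "!\<^sub>m f \<equiv> bangm M f"
abbreviation \<delta> where "\<delta> \<equiv> dlt M"
abbreviation \<epsilon> where "\<epsilon> \<equiv> eps M"
abbreviation m where "m \<equiv> mon M"
abbreviation m\<^sub>K where "m\<^sub>K \<equiv> monK M"
abbreviation \<Delta> where "\<Delta> \<equiv> cop M"
abbreviation e where "e \<equiv> cou M"
abbreviation nablaM ("\<nabla>") where "\<nabla> \<equiv> nabla C M"
abbreviation u where "u \<equiv> unitm C M"

lemmas modality_axioms = modality[unfolded monoidal_coalgebra_modality_def hom_iff]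

lemma arr_bangm [simp]: "arr f \<Longrightarrow> arr (!\<^sub>m f)"
  and src_bangm [simp]: "arr f \<Longrightarrow> src (!\<^sub>m f) = !(src f)"
  and tgt_bangm [simp]: "arr f \<Longrightarrow> tgt (!\<^sub>m f) = !(tgt f)"
  using modality_axioms by metis+

lemma bangm_idt [simp]: "!\<^sub>m (idt C A) = idt C (!A)" using modality_axioms by metis+

lemma bangm_comp: "arr f \<Longrightarrow> arr g \<Longrightarrow> tgt f = src g \<Longrightarrow> !\<^sub>m (f \<cdot> g) = !\<^sub>m f \<cdot> !\<^sub>m g"
  using modality_axioms by metis

lemma dlt_typing [simp]: "arr (\<delta> A)" "src (\<delta> A) = !A" "tgt (\<delta> A) = !(!A)"
  using modality_axioms by metis+

lemma eps_typing [simp]: "arr (\<epsilon> A)" "src (\<epsilon> A) = !A" "tgt (\<epsilon> A) = A"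
  using modality_axioms by metis+

lemma dlt_natural: "arr f \<Longrightarrow> !\<^sub>m f \<cdot> \<delta> (tgt f) = \<delta> (src f) \<cdot> !\<^sub>m (!\<^sub>m f)"
  using modality_axioms by metis

lemma eps_natural: "arr f \<Longrightarrow> !\<^sub>m f \<cdot> \<epsilon> (tgt f) = \<epsilon> (src f) \<cdot> f"
  using modality_axioms by metis

lemma dlt_eps [simp]: "\<delta> A \<cdot> \<epsilon> (!A) = idt C (!A)" using modality_axioms by metis+

lemma dlt_bangm_eps [simp]: "\<delta> A \<cdot> !\<^sub>m (\<epsilon> A) = idt C (!A)" using modality_axioms by metis+

lemma dlt_dlt: "\<delta> A \<cdot> \<delta> (!A) = \<delta> A \<cdot> !\<^sub>m (\<delta> A)" using modality_axioms by metis+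

lemma mon_typing [simp]: "arr (m A B)" "src (m A B) = !A \<odot> !B" "tgt (m A B) = !(A \<odot> B)"
  using modality_axioms by metis+

lemma monK_typing [simp]: "arr m\<^sub>K" "src m\<^sub>K = K" "tgt m\<^sub>K = !K"
  using modality_axioms by metis+

lemma mon_natural: "arr f \<Longrightarrow> arr g \<Longrightarrow> (!\<^sub>m f \<otimes> !\<^sub>m g) \<cdot> m (tgt f) (tgt g) = m (src f) (src g) \<cdot> !\<^sub>m (f \<otimes> g)"
  using modality_axioms by metis

lemma mon_asc: "asc C (!A) (!B) (!E) \<cdot> (idt C (!A) \<otimes> m B E) \<cdot> m A (B \<odot> E) =
   (m A B \<otimes> idt C (!E)) \<cdot> m (A \<odot> B) E \<cdot> !\<^sub>m (asc C A B E)" using modality_axioms by metis+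

lemma mon_lu: "(m\<^sub>K \<otimes> idt C (!A)) \<cdot> m K A \<cdot> !\<^sub>m (lu C A) = lu C (!A)" using modality_axioms by metis+

lemma mon_ru: "(idt C (!A) \<otimes> m\<^sub>K) \<cdot> m A K \<cdot> !\<^sub>m (ru C A) = ru C (!A)" using modality_axioms by metis+

lemma mon_eps: "m A B \<cdot> \<epsilon> (A \<odot> B) = \<epsilon> A \<otimes> \<epsilon> B" using modality_axioms by metis+

lemma monK_eps [simp]: "m\<^sub>K \<cdot> \<epsilon> K = idt C K" using modality_axioms by metis+

lemma mon_dlt: "m A B \<cdot> \<delta> (A \<odot> B) = (\<delta> A \<otimes> \<delta> B) \<cdot> m (!A) (!B) \<cdot> !\<^sub>m (m A B)"
  using modality_axioms by metis+

lemma monK_dlt: "m\<^sub>K \<cdot> \<delta> K = m\<^sub>K \<cdot> !\<^sub>m m\<^sub>K" using modality_axioms by metis+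

lemma cop_typing [simp]: "arr (\<Delta> A)" "src (\<Delta> A) = !A" "tgt (\<Delta> A) = !A \<odot> !A"
  using modality_axioms by metis+

lemma cou_typing [simp]: "arr (e A)" "src (e A) = !A" "tgt (e A) = K"
  using modality_axioms by metis+

lemma cop_counit_left: "\<Delta> A \<cdot> (e A \<otimes> idt C (!A)) \<cdot> lu C (!A) = idt C (!A)"
  using modality_axioms by metis+

lemma cop_counit_right: "\<Delta> A \<cdot> (idt C (!A) \<otimes> e A) \<cdot> ru C (!A) = idt C (!A)"
  using modality_axioms by metis+

lemma cop_natural: "arr f \<Longrightarrow> !\<^sub>m f \<cdot> \<Delta> (tgt f) = \<Delta> (src f) \<cdot> (!\<^sub>m f \<otimes> !\<^sub>m f)"
  using modality_axioms by metis

lemma cou_natural [simp]: "arr f \<Longrightarrow> tgt f = B \<Longrightarrow> !\<^sub>m f \<cdot> e B = e (src f)"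
  using modality_axioms by metis

lemma dlt_cop: "\<delta> A \<cdot> \<Delta> (!A) = \<Delta> A \<cdot> (\<delta> A \<otimes> \<delta> A)" using modality_axioms by metis+

lemma dlt_cou [simp]: "\<delta> A \<cdot> e (!A) = e A" using modality_axioms by metis+

lemma mon_cop: "m A B \<cdot> \<Delta> (A \<odot> B) = (\<Delta> A \<otimes> \<Delta> B) \<cdot> interchange C (!A) (!A) (!B) (!B) \<cdot> (m A B \<otimes> m A B)"
  using modality_axioms by metis+

lemma monK_cop: "m\<^sub>K \<cdot> \<Delta> K = cinv C (ru C K) \<cdot> (m\<^sub>K \<otimes> m\<^sub>K)" using modality_axioms by metis+

lemma mon_cou: "m A B \<cdot> e (A \<odot> B) = (e A \<otimes> e B) \<cdot> lu C K" using modality_axioms by metis+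

lemma monK_cou [simp]: "m\<^sub>K \<cdot> e K = idt C K" using modality_axioms by metis+

lemma dlt_bangm_cop: "\<delta> A \<cdot> !\<^sub>m (\<Delta> A) = \<Delta> A \<cdot> (\<delta> A \<otimes> \<delta> A) \<cdot> m (!A) (!A)" using modality_axioms by metis+

lemma dlt_bangm_cou: "\<delta> A \<cdot> !\<^sub>m (e A) = e A \<cdot> m\<^sub>K" using modality_axioms by metis+

lemma cop_coassoc: "\<Delta> A \<cdot> (\<Delta> A \<otimes> idt C (!A)) \<cdot> asc C (!A) (!A) (!A) = \<Delta> A \<cdot> (idt C (!A) \<otimes> \<Delta> A)"
  using modality_axioms by metis

lemma cop_cocommute: "\<Delta> A \<cdot> symm C (!A) (!A) = \<Delta> A"
  using modality_axioms by metis

definition coalg_tensor where "coalg_tensor w v X Y = (w \<otimes> v) \<cdot> m X Y"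

abbreviation dlt_tensor where "dlt_tensor A B \<equiv> coalg_tensor (\<delta> A) (\<delta> B) (!A) (!B)"

lemma coalg_tensor_typing [simp]: "arr w \<Longrightarrow> arr v \<Longrightarrow> tgt w = !X \<Longrightarrow> tgt v = !Y \<Longrightarrow> arr (coalg_tensor w v X Y)"
  "arr w \<Longrightarrow> arr v \<Longrightarrow> tgt w = !X \<Longrightarrow> tgt v = !Y \<Longrightarrow> src (coalg_tensor w v X Y) = src w \<odot> src v"
  "arr w \<Longrightarrow> arr v \<Longrightarrow> tgt w = !X \<Longrightarrow> tgt v = !Y \<Longrightarrow> tgt (coalg_tensor w v X Y) = !(X \<odot> Y)"
  unfolding coalg_tensor_def by simp_all

text \<open>\<open>coalg_map w v x\<close>: \<open>x\<close> is a map of \<open>!\<close>-coalgebras from \<open>(src x, w)\<close> to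
  \<open>(tgt x, v)\<close>. Only this commuting square is ever used, so \<open>w\<close> and \<open>v\<close> are not required
  to satisfy the coalgebra laws.\<close>

definition coalg_map where "coalg_map w v x \<longleftrightarrow> x \<cdot> v = w \<cdot> !\<^sub>m x"

text \<open>\<open>(!B, \<delta> B)\<close> is the cofree coalgebra on \<open>B\<close>: a coalgebra map into it is determined
  by its composite with \<open>\<epsilon> B\<close>.\<close>

lemma coalg_map_factors:
  assumes "arr x" "arr w" "tgt x = !B" "src w = src x" "tgt w = !(src x)" "x \<cdot> \<delta> B = w \<cdot> !\<^sub>m x"
  shows "x = w \<cdot> !\<^sub>m (x \<cdot> \<epsilon> B)"
proof -
  have "x = x \<cdot> (\<delta> B \<cdot> !\<^sub>m (\<epsilon> B))" using assms(1-5) by simp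
  also have "\<dots> = (x \<cdot> \<delta> B) \<cdot> !\<^sub>m (\<epsilon> B)" using assms(1-5) by (simp add: comp_assoc)
  also have "\<dots> = (w \<cdot> !\<^sub>m x) \<cdot> !\<^sub>m (\<epsilon> B)" using assms(6) by simp
  also have "\<dots> = w \<cdot> !\<^sub>m (x \<cdot> \<epsilon> B)" using assms(1-5) by (simp add: comp_assoc bangm_comp)
  finally show ?thesis .
qed

lemma coalg_map_eqI:
  assumes "coalg_map w (\<delta> B) x" "coalg_map w (\<delta> B) y" "x \<cdot> \<epsilon> B = y \<cdot> \<epsilon> B"
    and "arr x" "arr y" "arr w" "tgt x = !B" "tgt y = !B" "src y = src x"
      "src w = src x" "tgt w = !(src x)"
  shows "x = y"
proof -
  have "x = w \<cdot> !\<^sub>m (x \<cdot> \<epsilon> B)" by (rule coalg_map_factors) (use assms in \<open>simp_all add: coalg_map_def\<close>)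
  also have "\<dots> = w \<cdot> !\<^sub>m (y \<cdot> \<epsilon> B)" using assms(3) by simp
  also have "\<dots> = y" by (rule coalg_map_factors[symmetric]) (use assms in \<open>simp_all add: coalg_map_def\<close>)
  finally show ?thesis .
qed

lemma coalg_map_comp:
  assumes "arr x" "arr y" "arr w" "arr v" "arr t" "tgt x = src y" "src w = src x" "tgt w = !(src x)"
     "src v = src y" "tgt v = !(src y)" "src t = tgt y" "tgt t = !(tgt y)"
     "coalg_map w v x" "coalg_map v t y"
  shows "coalg_map w t (x \<cdot> y)"
proof -
  have "x \<cdot> y \<cdot> t = x \<cdot> (y \<cdot> t)" using assms by (simp add: comp_assoc)
  also have "\<dots> = x \<cdot> (v \<cdot> !\<^sub>m y)" using assms by (simp add: coalg_map_def)
  also have "\<dots> = (x \<cdot> v) \<cdot> !\<^sub>m y" using assms by (simp add: comp_assoc)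
  also have "\<dots> = (w \<cdot> !\<^sub>m x) \<cdot> !\<^sub>m y" using assms by (simp add: coalg_map_def)
  also have "\<dots> = w \<cdot> !\<^sub>m (x \<cdot> y)" using assms by (simp add: comp_assoc bangm_comp)
  finally show ?thesis unfolding coalg_map_def .
qed

lemma coalg_map_tensor:
  assumes "arr x" "arr y" "arr w" "arr v" "arr w'" "arr v'"
    "src w = src x" "tgt w = !(src x)" "src v = src y" "tgt v = !(src y)"
    "src w' = tgt x" "tgt w' = !(tgt x)" "src v' = tgt y" "tgt v' = !(tgt y)"
    "coalg_map w w' x" "coalg_map v v' y"
  shows "coalg_map (coalg_tensor w v (src x) (src y)) (coalg_tensor w' v' (tgt x) (tgt y)) (x \<otimes> y)"
proof -
  have "(x \<otimes> y) \<cdot> ((w' \<otimes> v') \<cdot> m (tgt x) (tgt y)) = ((x \<otimes> y) \<cdot> (w' \<otimes> v')) \<cdot> m (tgt x) (tgt y)"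
    using assms by (simp add: comp_assoc)
  also have "\<dots> = ((x \<cdot> w') \<otimes> (y \<cdot> v')) \<cdot> m (tgt x) (tgt y)" using assms by (simp add: tensor_comp)
  also have "\<dots> = ((w \<cdot> !\<^sub>m x) \<otimes> (v \<cdot> !\<^sub>m y)) \<cdot> m (tgt x) (tgt y)" using assms by (simp add: coalg_map_def)
  also have "\<dots> = (w \<otimes> v) \<cdot> ((!\<^sub>m x \<otimes> !\<^sub>m y) \<cdot> m (tgt x) (tgt y))"
    using assms by (simp add: tensor_comp comp_assoc)
  also have "\<dots> = (w \<otimes> v) \<cdot> (m (src x) (src y) \<cdot> !\<^sub>m (x \<otimes> y))" using assms by (simp add: mon_natural)
  also have "\<dots> = (w \<otimes> v) \<cdot> m (src x) (src y) \<cdot> !\<^sub>m (x \<otimes> y)" using assms by (simp add: comp_assoc)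
  finally show ?thesis unfolding coalg_map_def coalg_tensor_def .
qed

lemma coalg_map_idt: "arr w \<Longrightarrow> src w = X \<Longrightarrow> tgt w = !X \<Longrightarrow> coalg_map w w (idt C X)"
  unfolding coalg_map_def by simp

lemma coalg_map_bangm: "arr f \<Longrightarrow> coalg_map (\<delta> (src f)) (\<delta> (tgt f)) (!\<^sub>m f)"
  unfolding coalg_map_def by (simp add: dlt_natural)

definition eps_sum where "eps_sum A = ((\<epsilon> A \<otimes> e A) \<cdot> ru C A) \<oplus> ((e A \<otimes> \<epsilon> A) \<cdot> lu C A)"

lemma eps_sum_typing [simp]: "arr (eps_sum A)" "src (eps_sum A) = !A \<odot> !A" "tgt (eps_sum A) = A"
  unfolding eps_sum_def by simp_all

lemma nabla_eq: "\<nabla> A = dlt_tensor A A \<cdot> !\<^sub>m (eps_sum A)"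
  unfolding nabla_def eps_sum_def coalg_tensor_def by simp

lemma nabla_typing [simp]: "arr (\<nabla> A)" "src (\<nabla> A) = !A \<odot> !A" "tgt (\<nabla> A) = !A"
  unfolding nabla_eq by simp_all

lemma unitm_typing [simp]: "arr (u A)" "src (u A) = K" "tgt (u A) = !A"
  unfolding unitm_def by simp_all

lemma dlt_tensor_bangm_eps:
  assumes "arr g" "src g = !A \<odot> !B"
  shows "dlt_tensor A B \<cdot> !\<^sub>m g \<cdot> \<epsilon> (tgt g) = g"
proof -
  have "dlt_tensor A B \<cdot> !\<^sub>m g \<cdot> \<epsilon> (tgt g) = dlt_tensor A B \<cdot> (!\<^sub>m g \<cdot> \<epsilon> (tgt g))"
    using assms by (simp add: comp_assoc)
  also have "\<dots> = dlt_tensor A B \<cdot> (\<epsilon> (!A \<odot> !B) \<cdot> g)" using assms by (simp add: eps_natural)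
  also have "\<dots> = (\<delta> A \<otimes> \<delta> B) \<cdot> (m (!A) (!B) \<cdot> \<epsilon> (!A \<odot> !B)) \<cdot> g"
    using assms by (simp add: comp_assoc coalg_tensor_def)
  also have "\<dots> = ((\<delta> A \<cdot> \<epsilon> (!A)) \<otimes> (\<delta> B \<cdot> \<epsilon> (!B))) \<cdot> g"
    using assms by (simp add: mon_eps tensor_comp[symmetric])
  also have "\<dots> = g" using assms by simp
  finally show ?thesis .
qed

lemma nabla_eps: "\<nabla> A \<cdot> \<epsilon> A = eps_sum A"
  using dlt_tensor_bangm_eps[of "eps_sum A" A A] unfolding nabla_eq by simp

lemma coalg_map_dlt: "coalg_map (\<delta> A) (\<delta> (!A)) (\<delta> A)"
  unfolding coalg_map_def by (simp add: dlt_dlt)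

lemma coalg_map_mon: "coalg_map (dlt_tensor X Y) (\<delta> (X \<odot> Y)) (m X Y)"
  unfolding coalg_map_def coalg_tensor_def using mon_dlt[of X Y] by (simp add: comp_assoc)

lemma coalg_map_dlt_tensor: "coalg_map (dlt_tensor A B) (\<delta> (!A \<odot> !B)) (dlt_tensor A B)"
proof -
  have "coalg_map (dlt_tensor A B) (dlt_tensor (!A) (!B)) (\<delta> A \<otimes> \<delta> B)"
    using coalg_map_tensor[of "\<delta> A" "\<delta> B" "\<delta> A" "\<delta> B" "\<delta> (!A)" "\<delta> (!B)"] coalg_map_dlt
    by (simp add: coalg_tensor_def)
  then show ?thesis using coalg_map_mon[of "!A" "!B"] unfolding coalg_tensor_def
    by (intro coalg_map_comp[where v="(\<delta> (!A) \<otimes> \<delta> (!B)) \<cdot> m (!(!A)) (!(!B))"]) simp_all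
qed

lemma coalg_map_dlt_tensor_bangm:
  assumes "arr g" "src g = !A \<odot> !B"
  shows "coalg_map (dlt_tensor A B) (\<delta> (tgt g)) (dlt_tensor A B \<cdot> !\<^sub>m g)"
  using coalg_map_dlt_tensor[of A B] coalg_map_bangm[of g] assms
  by (intro coalg_map_comp[where v="\<delta> (!A \<odot> !B)"]) (simp_all add: coalg_tensor_def)

lemma coalg_map_nabla: "coalg_map (dlt_tensor A A) (\<delta> A) (\<nabla> A)"
  unfolding nabla_eq using coalg_map_dlt_tensor_bangm[of "eps_sum A" A A] by simp

lemma coalg_map_asc:
  assumes "arr w" "arr v" "arr t" "src w = X" "tgt w = !X" "src v = Y" "tgt v = !Y" "src t = Z"
    "tgt t = !Z"
  shows "coalg_map (coalg_tensor (coalg_tensor w v X Y) t (X \<odot> Y) Z)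
                   (coalg_tensor w (coalg_tensor v t Y Z) X (Y \<odot> Z)) (asc C X Y Z)"
proof -
  have tensor_split: "w \<otimes> ((v \<otimes> t) \<cdot> m Y Z) = (w \<otimes> (v \<otimes> t)) \<cdot> (idt C (!X) \<otimes> m Y Z)"
    using tensor_comp[of w "idt C (!X)" "v \<otimes> t" "m Y Z"] assms by simp
  have "asc C X Y Z \<cdot> ((w \<otimes> ((v \<otimes> t) \<cdot> m Y Z)) \<cdot> m X (Y \<odot> Z))
     = (asc C X Y Z \<cdot> (w \<otimes> (v \<otimes> t))) \<cdot> ((idt C (!X) \<otimes> m Y Z) \<cdot> m X (Y \<odot> Z))"
    unfolding tensor_split using assms by (simp add: comp_assoc)
  also have "\<dots> = (((w \<otimes> v) \<otimes> t) \<cdot> asc C (!X) (!Y) (!Z)) \<cdot> ((idt C (!X) \<otimes> m Y Z) \<cdot> m X (Y \<odot> Z))"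
    using assms asc_natural[of w v t] by simp
  also have "\<dots> = ((w \<otimes> v) \<otimes> t) \<cdot> (asc C (!X) (!Y) (!Z) \<cdot> (idt C (!X) \<otimes> m Y Z) \<cdot> m X (Y \<odot> Z))"
    using assms by (simp add: comp_assoc)
  also have "\<dots> = ((w \<otimes> v) \<otimes> t) \<cdot> ((m X Y \<otimes> idt C (!Z)) \<cdot> m (X \<odot> Y) Z \<cdot> !\<^sub>m (asc C X Y Z))"
    by (simp add: mon_asc)
  also have "\<dots> = (((w \<otimes> v) \<otimes> t) \<cdot> (m X Y \<otimes> idt C (!Z))) \<cdot> m (X \<odot> Y) Z \<cdot> !\<^sub>m (asc C X Y Z)"
    using assms by (simp add: comp_assoc)
  also have "\<dots> = (((w \<otimes> v) \<cdot> m X Y) \<otimes> (t \<cdot> idt C (!Z))) \<cdot> m (X \<odot> Y) Z \<cdot> !\<^sub>m (asc C X Y Z)"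
    using assms by (simp add: tensor_comp[symmetric])
  finally show ?thesis using assms unfolding coalg_map_def coalg_tensor_def by simp
qed

lemma coalg_map_lu:
  assumes "arr w" "src w = X" "tgt w = !X"
  shows "coalg_map (coalg_tensor m\<^sub>K w K X) w (lu C X)"
proof -
  have "lu C X \<cdot> w = (idt C K \<otimes> w) \<cdot> lu C (!X)" using assms lu_natural[of w] by simp
  also have "\<dots> = (idt C K \<otimes> w) \<cdot> ((m\<^sub>K \<otimes> idt C (!X)) \<cdot> m K X \<cdot> !\<^sub>m (lu C X))" by (simp add: mon_lu)
  also have "\<dots> = ((idt C K \<otimes> w) \<cdot> (m\<^sub>K \<otimes> idt C (!X))) \<cdot> m K X \<cdot> !\<^sub>m (lu C X)"
    using assms by (simp add: comp_assoc)
  also have "\<dots> = (m\<^sub>K \<otimes> w) \<cdot> m K X \<cdot> !\<^sub>m (lu C X)" using assms by (simp add: tensor_comp[symmetric])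
  finally show ?thesis unfolding coalg_map_def coalg_tensor_def .
qed

lemma coalg_map_ru:
  assumes "arr w" "src w = X" "tgt w = !X"
  shows "coalg_map (coalg_tensor w m\<^sub>K X K) w (ru C X)"
proof -
  have "ru C X \<cdot> w = (w \<otimes> idt C K) \<cdot> ru C (!X)" using assms ru_natural[of w] by simp
  also have "\<dots> = (w \<otimes> idt C K) \<cdot> ((idt C (!X) \<otimes> m\<^sub>K) \<cdot> m X K \<cdot> !\<^sub>m (ru C X))" by (simp add: mon_ru)
  also have "\<dots> = ((w \<otimes> idt C K) \<cdot> (idt C (!X) \<otimes> m\<^sub>K)) \<cdot> m X K \<cdot> !\<^sub>m (ru C X)"
    using assms by (simp add: comp_assoc)
  also have "\<dots> = (w \<otimes> m\<^sub>K) \<cdot> m X K \<cdot> !\<^sub>m (ru C X)" using assms by (simp add: tensor_comp[symmetric])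
  finally show ?thesis unfolding coalg_map_def coalg_tensor_def .
qed

lemma coalg_map_monK: "coalg_map m\<^sub>K (\<delta> K) m\<^sub>K" unfolding coalg_map_def by (simp add: monK_dlt)

lemma coalg_map_unitm: "coalg_map m\<^sub>K (\<delta> A) (u A)"
  unfolding unitm_def using coalg_map_monK coalg_map_bangm[of "zerm C K A"]
  by (intro coalg_map_comp[where v="\<delta> K"]) simp_all

lemma coalg_map_cou: "coalg_map (\<delta> A) m\<^sub>K (e A)" unfolding coalg_map_def by (simp add: dlt_bangm_cou)

lemma coalg_map_cop: "coalg_map (\<delta> A) (dlt_tensor A A) (\<Delta> A)"
  unfolding coalg_map_def coalg_tensor_def using dlt_bangm_cop[of A] by (simp add: comp_assoc)

lemma nabla_cou: "\<nabla> A \<cdot> e A = (e A \<otimes> e A) \<cdot> lu C K"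
proof -
  have "\<nabla> A \<cdot> e A = (\<delta> A \<otimes> \<delta> A) \<cdot> (m (!A) (!A) \<cdot> (!\<^sub>m (eps_sum A) \<cdot> e A))"
    unfolding nabla_eq coalg_tensor_def by (simp add: comp_assoc)
  also have "\<dots> = (\<delta> A \<otimes> \<delta> A) \<cdot> (m (!A) (!A) \<cdot> e (!A \<odot> !A))" by simp
  also have "\<dots> = ((\<delta> A \<otimes> \<delta> A) \<cdot> (e (!A) \<otimes> e (!A))) \<cdot> lu C K" by (simp add: mon_cou comp_assoc)
  also have "\<dots> = (e A \<otimes> e A) \<cdot> lu C K" by (simp add: tensor_comp[symmetric])
  finally show ?thesis .
qed

lemma unitm_eps: "u A \<cdot> \<epsilon> A = zerm C K A"
proof -
  have "u A \<cdot> \<epsilon> A = m\<^sub>K \<cdot> (!\<^sub>m (zerm C K A) \<cdot> \<epsilon> A)" unfolding unitm_def by (simp add: comp_assoc)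
  also have "\<dots> = m\<^sub>K \<cdot> (\<epsilon> K \<cdot> zerm C K A)" using eps_natural[of "zerm C K A"] by simp
  also have "\<dots> = (m\<^sub>K \<cdot> \<epsilon> K) \<cdot> zerm C K A" by (simp add: comp_assoc)
  also have "\<dots> = zerm C K A" by simp
  finally show ?thesis .
qed

lemma unitm_cou [simp]: "u A \<cdot> e A = idt C K"
  unfolding unitm_def by (simp add: comp_assoc)

lemma tensor_comp_eps_sum:
  assumes "arr p" "arr q" "tgt p = !A" "tgt q = !A"
  shows "(p \<otimes> q) \<cdot> eps_sum A = (((p \<cdot> \<epsilon> A) \<otimes> (q \<cdot> e A)) \<cdot> ru C A) \<oplus> (((p \<cdot> e A) \<otimes> (q \<cdot> \<epsilon> A)) \<cdot> lu C A)"
proof -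
  have "(p \<otimes> q) \<cdot> eps_sum A = ((p \<otimes> q) \<cdot> ((\<epsilon> A \<otimes> e A) \<cdot> ru C A)) \<oplus> ((p \<otimes> q) \<cdot> ((e A \<otimes> \<epsilon> A) \<cdot> lu C A))"
    unfolding eps_sum_def using assms by (simp add: comp_madd)
  also have "(p \<otimes> q) \<cdot> ((\<epsilon> A \<otimes> e A) \<cdot> ru C A) = ((p \<otimes> q) \<cdot> (\<epsilon> A \<otimes> e A)) \<cdot> ru C A"
    by (rule comp_assoc[symmetric]) (use assms in simp_all)
  also have "(p \<otimes> q) \<cdot> ((e A \<otimes> \<epsilon> A) \<cdot> lu C A) = ((p \<otimes> q) \<cdot> (e A \<otimes> \<epsilon> A)) \<cdot> lu C A"
    by (rule comp_assoc[symmetric]) (use assms in simp_all)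
  finally show ?thesis using assms by (simp add: tensor_comp)
qed

lemma comp_nabla_eps: "arr x \<Longrightarrow> tgt x = !A \<odot> !A \<Longrightarrow> x \<cdot> \<nabla> A \<cdot> \<epsilon> A = x \<cdot> eps_sum A"
  by (simp add: comp_assoc nabla_eps)

lemma nabla_unit_left: "(u A \<otimes> idt C (!A)) \<cdot> \<nabla> A = lu C (!A)"
proof (rule coalg_map_eqI[where w = "coalg_tensor m\<^sub>K (\<delta> A) K (!A)" and B = A])
  have "coalg_map (coalg_tensor m\<^sub>K (\<delta> A) K (!A)) (dlt_tensor A A) (u A \<otimes> idt C (!A))"
    using coalg_map_tensor[of "u A" "idt C (!A)" m\<^sub>K "\<delta> A" "\<delta> A" "\<delta> A"] 
      coalg_map_unitm coalg_map_idt[of "\<delta> A" "!A"]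
    by (simp add: coalg_tensor_def)
  then show "coalg_map (coalg_tensor m\<^sub>K (\<delta> A) K (!A)) (\<delta> A) ((u A \<otimes> idt C (!A)) \<cdot> \<nabla> A)"
    using coalg_map_nabla[of A] by (intro coalg_map_comp[where v="dlt_tensor A A"]) simp_all
  show "coalg_map (coalg_tensor m\<^sub>K (\<delta> A) K (!A)) (\<delta> A) (lu C (!A))"
    using coalg_map_lu[of "\<delta> A" "!A"] by simp
  have "(u A \<otimes> idt C (!A)) \<cdot> \<nabla> A \<cdot> \<epsilon> A = (u A \<otimes> idt C (!A)) \<cdot> eps_sum A"
    by (simp add: comp_nabla_eps)
  also have "\<dots> = ((zerm C K A \<otimes> e A) \<cdot> ru C A) \<oplus> ((idt C K \<otimes> \<epsilon> A) \<cdot> lu C A)"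
    by (simp add: tensor_comp_eps_sum unitm_eps)
  also have "\<dots> = lu C (!A) \<cdot> \<epsilon> A" using lu_natural[of "\<epsilon> A"] by simp
  finally show "(u A \<otimes> idt C (!A)) \<cdot> \<nabla> A \<cdot> \<epsilon> A = lu C (!A) \<cdot> \<epsilon> A" .
qed (simp_all add: coalg_tensor_def)

lemma nabla_unit_right: "(idt C (!A) \<otimes> u A) \<cdot> \<nabla> A = ru C (!A)"
proof (rule coalg_map_eqI[where w = "coalg_tensor (\<delta> A) m\<^sub>K (!A) K" and B = A])
  have "coalg_map (coalg_tensor (\<delta> A) m\<^sub>K (!A) K) (dlt_tensor A A) (idt C (!A) \<otimes> u A)"
    using coalg_map_tensor[of "idt C (!A)" "u A" "\<delta> A" m\<^sub>K "\<delta> A" "\<delta> A"] 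
      coalg_map_unitm coalg_map_idt[of "\<delta> A" "!A"]
    by (simp add: coalg_tensor_def)
  then show "coalg_map (coalg_tensor (\<delta> A) m\<^sub>K (!A) K) (\<delta> A) ((idt C (!A) \<otimes> u A) \<cdot> \<nabla> A)"
    using coalg_map_nabla[of A] by (intro coalg_map_comp[where v="dlt_tensor A A"]) simp_all
  show "coalg_map (coalg_tensor (\<delta> A) m\<^sub>K (!A) K) (\<delta> A) (ru C (!A))"
    using coalg_map_ru[of "\<delta> A" "!A"] by simp
  have "(idt C (!A) \<otimes> u A) \<cdot> \<nabla> A \<cdot> \<epsilon> A = (idt C (!A) \<otimes> u A) \<cdot> eps_sum A"
    by (simp add: comp_nabla_eps)
  also have "\<dots> = ((\<epsilon> A \<otimes> idt C K) \<cdot> ru C A) \<oplus> ((e A \<otimes> zerm C K A) \<cdot> lu C A)"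
    by (simp add: tensor_comp_eps_sum unitm_eps)
  also have "\<dots> = ru C (!A) \<cdot> \<epsilon> A" using ru_natural[of "\<epsilon> A"] by simp
  finally show "(idt C (!A) \<otimes> u A) \<cdot> \<nabla> A \<cdot> \<epsilon> A = ru C (!A) \<cdot> \<epsilon> A" .
qed (simp_all add: coalg_tensor_def)

lemma nabla_assoc_eps:
  "(\<nabla> A \<otimes> idt C (!A)) \<cdot> \<nabla> A \<cdot> \<epsilon> A = asc C (!A) (!A) (!A) \<cdot> (idt C (!A) \<otimes> \<nabla> A) \<cdot> \<nabla> A \<cdot> \<epsilon> A"
  (is "?L \<cdot> _ = ?R \<cdot> _")
proof -
  have "?L \<cdot> \<epsilon> A = (\<nabla> A \<otimes> idt C (!A)) \<cdot> eps_sum A" by (simp add: comp_nabla_eps)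
  also have "\<dots> = ((eps_sum A \<otimes> e A) \<cdot> ru C A) \<oplus> ((((e A \<otimes> e A) \<cdot> lu C K) \<otimes> \<epsilon> A) \<cdot> lu C A)"
    by (simp add: tensor_comp_eps_sum nabla_eps nabla_cou)
  also have "(eps_sum A \<otimes> e A) \<cdot> ru C A
      = ((((\<epsilon> A \<otimes> e A) \<cdot> ru C A) \<otimes> e A) \<cdot> ru C A) \<oplus> ((((e A \<otimes> \<epsilon> A) \<cdot> lu C A) \<otimes> e A) \<cdot> ru C A)"
    unfolding eps_sum_def by (simp add: madd_tensor madd_comp)
  finally have L: "?L \<cdot> \<epsilon> A = ((((\<epsilon> A \<otimes> e A) \<cdot> ru C A) \<otimes> e A) \<cdot> ru C A)
      \<oplus> ((((e A \<otimes> \<epsilon> A) \<cdot> lu C A) \<otimes> e A) \<cdot> ru C A) \<oplus> ((((e A \<otimes> e A) \<cdot> lu C K) \<otimes> \<epsilon> A) \<cdot> lu C A)" .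
  have "?R \<cdot> \<epsilon> A = (asc C (!A) (!A) (!A) \<cdot> (idt C (!A) \<otimes> \<nabla> A)) \<cdot> eps_sum A"
    by (simp add: comp_nabla_eps)
  also have "\<dots> = asc C (!A) (!A) (!A) \<cdot> ((idt C (!A) \<otimes> \<nabla> A) \<cdot> eps_sum A)"
    by (simp add: comp_assoc)
  also have "(idt C (!A) \<otimes> \<nabla> A) \<cdot> eps_sum A =
      ((\<epsilon> A \<otimes> ((e A \<otimes> e A) \<cdot> lu C K)) \<cdot> ru C A) \<oplus> ((e A \<otimes> eps_sum A) \<cdot> lu C A)"
    by (simp add: tensor_comp_eps_sum nabla_eps nabla_cou)
  also have "(e A \<otimes> eps_sum A) \<cdot> lu C A
      = ((e A \<otimes> ((\<epsilon> A \<otimes> e A) \<cdot> ru C A)) \<cdot> lu C A) \<oplus> ((e A \<otimes> ((e A \<otimes> \<epsilon> A) \<cdot> lu C A)) \<cdot> lu C A)"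
    unfolding eps_sum_def by (simp add: tensor_madd madd_comp)
  finally have R: "?R \<cdot> \<epsilon> A = asc C (!A) (!A) (!A) \<cdot> (((\<epsilon> A \<otimes> ((e A \<otimes> e A) \<cdot> lu C K)) \<cdot> ru C A)
      \<oplus> (((e A \<otimes> ((\<epsilon> A \<otimes> e A) \<cdot> ru C A)) \<cdot> lu C A) \<oplus> ((e A \<otimes> ((e A \<otimes> \<epsilon> A) \<cdot> lu C A)) \<cdot> lu C A)))" .
  show ?thesis unfolding L R
    by (simp add: comp_madd madd_assoc ru_tensor_ru_asc lu_tensor_ru_asc lu_tensor_lu_asc)
qed

lemma nabla_assoc:
  "(\<nabla> A \<otimes> idt C (!A)) \<cdot> \<nabla> A = asc C (!A) (!A) (!A) \<cdot> (idt C (!A) \<otimes> \<nabla> A) \<cdot> \<nabla> A"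
  (is "?L = ?R")
proof -
  let ?wl = "coalg_tensor (dlt_tensor A A) (\<delta> A) (!A \<odot> !A) (!A)"
  let ?wr = "coalg_tensor (\<delta> A) (dlt_tensor A A) (!A) (!A \<odot> !A)"
  have "coalg_map ?wl (dlt_tensor A A) (\<nabla> A \<otimes> idt C (!A))"
    using coalg_map_tensor[of "\<nabla> A" "idt C (!A)" "dlt_tensor A A" "\<delta> A" "\<delta> A" "\<delta> A"]
      coalg_map_nabla[of A] coalg_map_idt[of "\<delta> A" "!A"]
    by (simp add: coalg_tensor_def)
  then have L: "coalg_map ?wl (\<delta> A) ?L"
    using coalg_map_nabla[of A] by (intro coalg_map_comp[where v="dlt_tensor A A"]) simp_all
  have "coalg_map ?wl ?wr (asc C (!A) (!A) (!A))"
    using coalg_map_asc[of "\<delta> A" "\<delta> A" "\<delta> A" "!A" "!A" "!A"] by simp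
  moreover have "coalg_map ?wr (dlt_tensor A A) (idt C (!A) \<otimes> \<nabla> A)"
    using coalg_map_tensor[of "idt C (!A)" "\<nabla> A" "\<delta> A" "dlt_tensor A A" "\<delta> A" "\<delta> A"]
      coalg_map_nabla[of A] coalg_map_idt[of "\<delta> A" "!A"]
    by (simp add: coalg_tensor_def)
  ultimately have "coalg_map ?wl (dlt_tensor A A) (asc C (!A) (!A) (!A) \<cdot> (idt C (!A) \<otimes> \<nabla> A))"
    by (intro coalg_map_comp[where v="?wr"]) simp_all
  then have R: "coalg_map ?wl (\<delta> A) ?R"
    using coalg_map_nabla[of A] by (rule coalg_map_comp[where v="dlt_tensor A A", rotated -2]) simp_all
  from L R nabla_assoc_eps show ?thesis
    by (rule coalg_map_eqI) (simp_all add: coalg_tensor_def)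
qed

lemma nabla_cop: "\<nabla> A \<cdot> \<Delta> A = (\<Delta> A \<otimes> \<Delta> A) \<cdot> interchange C (!A) (!A) (!A) (!A) \<cdot> (\<nabla> A \<otimes> \<nabla> A)"
proof -
  let ?d = "\<delta> A \<otimes> \<delta> A" and ?m = "m (!A) (!A)" and ?b = "!\<^sub>m (eps_sum A)"
  let ?I' = "interchange C (!(!A)) (!(!A)) (!(!A)) (!(!A))"
  let ?I = "interchange C (!A) (!A) (!A) (!A)"
  have dn: "?b \<cdot> \<Delta> A = \<Delta> (!A \<odot> !A) \<cdot> (?b \<otimes> ?b)" using cop_natural[of "eps_sum A"] by simp
  have md: "?m \<cdot> \<Delta> (!A \<odot> !A) = ((\<Delta> (!A) \<otimes> \<Delta> (!A)) \<cdot> ?I') \<cdot> (?m \<otimes> ?m)" using mon_cop[of "!A" "!A"] .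
  have a: "?d \<cdot> (\<Delta> (!A) \<otimes> \<Delta> (!A)) = (\<Delta> A \<otimes> \<Delta> A) \<cdot> (?d \<otimes> ?d)"
    by (simp add: tensor_comp[symmetric] dlt_cop)
  have b: "(?d \<otimes> ?d) \<cdot> ?I' = ?I \<cdot> ((\<delta> A \<otimes> \<delta> A) \<otimes> (\<delta> A \<otimes> \<delta> A))"
    using interchange_natural[of "\<delta> A" "\<delta> A" "\<delta> A" "\<delta> A"] by simp
  have c: "(?d \<otimes> ?d) \<cdot> ((?m \<otimes> ?m) \<cdot> (?b \<otimes> ?b)) = \<nabla> A \<otimes> \<nabla> A"
  proof -
    have "(?d \<otimes> ?d) \<cdot> ((?m \<otimes> ?m) \<cdot> (?b \<otimes> ?b)) = ((?d \<otimes> ?d) \<cdot> (?m \<otimes> ?m)) \<cdot> (?b \<otimes> ?b)"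
      by (rule comp_assoc[symmetric]) simp_all
    also have "\<dots> = ((?d \<cdot> ?m) \<otimes> (?d \<cdot> ?m)) \<cdot> (?b \<otimes> ?b)" by (simp add: tensor_comp)
    also have "\<dots> = (?d \<cdot> ?m \<cdot> ?b) \<otimes> (?d \<cdot> ?m \<cdot> ?b)" by (simp add: tensor_comp)
    finally show ?thesis unfolding nabla_eq coalg_tensor_def .
  qed
  have "\<nabla> A \<cdot> \<Delta> A = ?d \<cdot> (?m \<cdot> (?b \<cdot> \<Delta> A))" unfolding nabla_eq coalg_tensor_def by (simp add: comp_assoc)
  also have "\<dots> = ?d \<cdot> (?m \<cdot> (\<Delta> (!A \<odot> !A) \<cdot> (?b \<otimes> ?b)))" by (simp only: dn)
  also have "\<dots> = ?d \<cdot> (((\<Delta> (!A) \<otimes> \<Delta> (!A)) \<cdot> ?I') \<cdot> ((?m \<otimes> ?m) \<cdot> (?b \<otimes> ?b)))"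
    using comp_eq_extend_right[OF md] by simp
  also have "\<dots> = (?d \<cdot> (\<Delta> (!A) \<otimes> \<Delta> (!A))) \<cdot> (?I' \<cdot> ((?m \<otimes> ?m) \<cdot> (?b \<otimes> ?b)))"
    by (simp add: comp_assoc)
  also have "\<dots> = ((\<Delta> A \<otimes> \<Delta> A) \<cdot> (?d \<otimes> ?d)) \<cdot> (?I' \<cdot> ((?m \<otimes> ?m) \<cdot> (?b \<otimes> ?b)))" by (simp only: a)
  also have "\<dots> = (\<Delta> A \<otimes> \<Delta> A) \<cdot> (((?d \<otimes> ?d) \<cdot> ?I') \<cdot> ((?m \<otimes> ?m) \<cdot> (?b \<otimes> ?b)))" by (simp add: comp_assoc)
  also have "\<dots> = (\<Delta> A \<otimes> \<Delta> A) \<cdot> ((?I \<cdot> (?d \<otimes> ?d)) \<cdot> ((?m \<otimes> ?m) \<cdot> (?b \<otimes> ?b)))" by (simp only: b)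
  also have "\<dots> = (\<Delta> A \<otimes> \<Delta> A) \<cdot> (?I \<cdot> ((?d \<otimes> ?d) \<cdot> ((?m \<otimes> ?m) \<cdot> (?b \<otimes> ?b))))"
    by (subst comp_assoc) simp_all
  also have "\<dots> = (\<Delta> A \<otimes> \<Delta> A) \<cdot> (?I \<cdot> (\<nabla> A \<otimes> \<nabla> A))" by (simp only: c)
  also have "\<dots> = (\<Delta> A \<otimes> \<Delta> A) \<cdot> ?I \<cdot> (\<nabla> A \<otimes> \<nabla> A)" by (simp add: comp_assoc)
  finally show ?thesis .
qed

lemma unitm_cop: "u A \<cdot> \<Delta> A = cinv C (ru C K) \<cdot> (u A \<otimes> u A)"
proof -
  have "u A \<cdot> \<Delta> A = m\<^sub>K \<cdot> (!\<^sub>m (zerm C K A) \<cdot> \<Delta> A)" unfolding unitm_def by (simp add: comp_assoc)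
  also have "\<dots> = m\<^sub>K \<cdot> (\<Delta> K \<cdot> (!\<^sub>m (zerm C K A) \<otimes> !\<^sub>m (zerm C K A)))"
    using cop_natural[of "zerm C K A"] by simp
  also have "\<dots> = (m\<^sub>K \<cdot> \<Delta> K) \<cdot> (!\<^sub>m (zerm C K A) \<otimes> !\<^sub>m (zerm C K A))" by (simp add: comp_assoc)
  also have "\<dots> = cinv C (ru C K) \<cdot> ((m\<^sub>K \<otimes> m\<^sub>K) \<cdot> (!\<^sub>m (zerm C K A) \<otimes> !\<^sub>m (zerm C K A)))"
    by (simp add: monK_cop comp_assoc)
  also have "\<dots> = cinv C (ru C K) \<cdot> (u A \<otimes> u A)" unfolding unitm_def by (simp add: tensor_comp)
  finally show ?thesis .
qed

lemma cop_counit_right_comp: assumes "arr f" "src f = !A" shows "\<Delta> A \<cdot> ((f \<otimes> e A) \<cdot> ru C (tgt f)) = f"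
proof -
  have "(f \<otimes> e A) = (idt C (!A) \<otimes> e A) \<cdot> (f \<otimes> idt C K)" using assms by (simp add: tensor_comp[symmetric])
  then have "\<Delta> A \<cdot> ((f \<otimes> e A) \<cdot> ru C (tgt f))
      = \<Delta> A \<cdot> ((idt C (!A) \<otimes> e A) \<cdot> ((f \<otimes> idt C K) \<cdot> ru C (tgt f)))"
    using assms by (simp add: comp_assoc)
  also have "\<dots> = \<Delta> A \<cdot> ((idt C (!A) \<otimes> e A) \<cdot> (ru C (!A) \<cdot> f))" using assms ru_natural[of f] by simp
  also have "\<dots> = (\<Delta> A \<cdot> (idt C (!A) \<otimes> e A) \<cdot> ru C (!A)) \<cdot> f" using assms by (simp add: comp_assoc)
  also have "\<dots> = f" using assms by (simp add: cop_counit_right)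
  finally show ?thesis .
qed

lemma cop_counit_left_comp: assumes "arr f" "src f = !A" shows "\<Delta> A \<cdot> ((e A \<otimes> f) \<cdot> lu C (tgt f)) = f"
proof -
  have "(e A \<otimes> f) = (e A \<otimes> idt C (!A)) \<cdot> (idt C K \<otimes> f)" using assms by (simp add: tensor_comp[symmetric])
  then have "\<Delta> A \<cdot> ((e A \<otimes> f) \<cdot> lu C (tgt f))
      = \<Delta> A \<cdot> ((e A \<otimes> idt C (!A)) \<cdot> ((idt C K \<otimes> f) \<cdot> lu C (tgt f)))"
    using assms by (simp add: comp_assoc)
  also have "\<dots> = \<Delta> A \<cdot> ((e A \<otimes> idt C (!A)) \<cdot> (lu C (!A) \<cdot> f))" using assms lu_natural[of f] by simp
  also have "\<dots> = (\<Delta> A \<cdot> (e A \<otimes> idt C (!A)) \<cdot> lu C (!A)) \<cdot> f" using assms by (simp add: comp_assoc)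
  also have "\<dots> = f" using assms by (simp add: cop_counit_left)
  finally show ?thesis .
qed

lemma coalg_map_idt_tensor_bangm:
  "arr n \<Longrightarrow> src n = A \<Longrightarrow> tgt n = A \<Longrightarrow> coalg_map (dlt_tensor A A) (dlt_tensor A A) (idt C (!A) \<otimes> !\<^sub>m n)"
  using coalg_map_tensor[of "idt C (!A)" "!\<^sub>m n" "\<delta> A" "\<delta> A" "\<delta> A" "\<delta> A"]
    coalg_map_idt[of "\<delta> A" "!A"] coalg_map_bangm[of n]
  by (simp add: coalg_tensor_def)
lemma coalg_map_bangm_tensor_idt:
  "arr n \<Longrightarrow> src n = A \<Longrightarrow> tgt n = A \<Longrightarrow> coalg_map (dlt_tensor A A) (dlt_tensor A A) (!\<^sub>m n \<otimes> idt C (!A))"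
  using coalg_map_tensor[of "!\<^sub>m n" "idt C (!A)" "\<delta> A" "\<delta> A" "\<delta> A" "\<delta> A"]
    coalg_map_idt[of "\<delta> A" "!A"] coalg_map_bangm[of n]
  by (simp add: coalg_tensor_def)

lemma coalg_map_cou_unitm: "coalg_map (\<delta> A) (\<delta> A) (e A \<cdot> u A)"
  using coalg_map_cou[of A] coalg_map_unitm[of A] by (intro coalg_map_comp[where v=m\<^sub>K]) simp_all

lemma cou_unitm_eps: "e A \<cdot> u A \<cdot> \<epsilon> A = zerm C (!A) A"
  by (simp add: comp_assoc unitm_eps)

lemma antipode_right:
  assumes n: "arr n" "src n = A" "tgt n = A" "idt C A \<oplus> n = zerm C A A"
  shows "\<Delta> A \<cdot> (idt C (!A) \<otimes> !\<^sub>m n) \<cdot> \<nabla> A = e A \<cdot> u A"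
proof (rule coalg_map_eqI[where w = "\<delta> A" and B = A])
  have "coalg_map (\<delta> A) (dlt_tensor A A) (\<Delta> A \<cdot> (idt C (!A) \<otimes> !\<^sub>m n))"
    using coalg_map_cop[of A] coalg_map_idt_tensor_bangm[OF n(1-3)] n
    by (intro coalg_map_comp[where v="dlt_tensor A A"]) simp_all
  then show "coalg_map (\<delta> A) (\<delta> A) (\<Delta> A \<cdot> (idt C (!A) \<otimes> !\<^sub>m n) \<cdot> \<nabla> A)"
    using coalg_map_nabla[of A]
    by (rule coalg_map_comp[where v="dlt_tensor A A", rotated -2]) (use n in simp_all)
  show "coalg_map (\<delta> A) (\<delta> A) (e A \<cdot> u A)" by (rule coalg_map_cou_unitm)
  have "\<Delta> A \<cdot> (idt C (!A) \<otimes> !\<^sub>m n) \<cdot> \<nabla> A \<cdot> \<epsilon> A = \<Delta> A \<cdot> ((idt C (!A) \<otimes> !\<^sub>m n) \<cdot> eps_sum A)"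
    using n by (simp add: comp_assoc nabla_eps)
  also have "(idt C (!A) \<otimes> !\<^sub>m n) \<cdot> eps_sum A = ((\<epsilon> A \<otimes> e A) \<cdot> ru C A) \<oplus> ((e A \<otimes> (\<epsilon> A \<cdot> n)) \<cdot> lu C A)"
    using n eps_natural[of n] by (simp add: tensor_comp_eps_sum)
  also have "\<Delta> A \<cdot> (((\<epsilon> A \<otimes> e A) \<cdot> ru C A) \<oplus> ((e A \<otimes> (\<epsilon> A \<cdot> n)) \<cdot> lu C A))
     = (\<Delta> A \<cdot> ((\<epsilon> A \<otimes> e A) \<cdot> ru C A)) \<oplus> (\<Delta> A \<cdot> ((e A \<otimes> (\<epsilon> A \<cdot> n)) \<cdot> lu C A))"
    using n by (simp add: comp_madd)
  also have "\<dots> = \<epsilon> A \<oplus> (\<epsilon> A \<cdot> n)"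
    using n cop_counit_right_comp[of "\<epsilon> A" A] cop_counit_left_comp[of "\<epsilon> A \<cdot> n" A] by simp
  also have "\<dots> = \<epsilon> A \<cdot> (idt C A \<oplus> n)" using n(1-3) by (simp add: comp_madd)
  also have "\<dots> = zerm C (!A) A" using n by simp
  finally show "\<Delta> A \<cdot> (idt C (!A) \<otimes> !\<^sub>m n) \<cdot> \<nabla> A \<cdot> \<epsilon> A = e A \<cdot> u A \<cdot> \<epsilon> A"
    by (simp add: cou_unitm_eps)
qed (use n in simp_all)

lemma antipode_left:
  assumes n: "arr n" "src n = A" "tgt n = A" "idt C A \<oplus> n = zerm C A A"
  shows "\<Delta> A \<cdot> (!\<^sub>m n \<otimes> idt C (!A)) \<cdot> \<nabla> A = e A \<cdot> u A"
proof (rule coalg_map_eqI[where w = "\<delta> A" and B = A])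
  have "coalg_map (\<delta> A) (dlt_tensor A A) (\<Delta> A \<cdot> (!\<^sub>m n \<otimes> idt C (!A)))"
    using coalg_map_cop[of A] coalg_map_bangm_tensor_idt[OF n(1-3)] n
    by (intro coalg_map_comp[where v="dlt_tensor A A"]) simp_all
  then show "coalg_map (\<delta> A) (\<delta> A) (\<Delta> A \<cdot> (!\<^sub>m n \<otimes> idt C (!A)) \<cdot> \<nabla> A)"
    using coalg_map_nabla[of A]
    by (rule coalg_map_comp[where v="dlt_tensor A A", rotated -2]) (use n in simp_all)
  show "coalg_map (\<delta> A) (\<delta> A) (e A \<cdot> u A)" by (rule coalg_map_cou_unitm)
  have "\<Delta> A \<cdot> (!\<^sub>m n \<otimes> idt C (!A)) \<cdot> \<nabla> A \<cdot> \<epsilon> A = \<Delta> A \<cdot> ((!\<^sub>m n \<otimes> idt C (!A)) \<cdot> eps_sum A)"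
    using n by (simp add: comp_assoc nabla_eps)
  also have "(!\<^sub>m n \<otimes> idt C (!A)) \<cdot> eps_sum A = (((\<epsilon> A \<cdot> n) \<otimes> e A) \<cdot> ru C A) \<oplus> ((e A \<otimes> \<epsilon> A) \<cdot> lu C A)"
    using n eps_natural[of n] by (simp add: tensor_comp_eps_sum)
  also have "\<Delta> A \<cdot> ((((\<epsilon> A \<cdot> n) \<otimes> e A) \<cdot> ru C A) \<oplus> ((e A \<otimes> \<epsilon> A) \<cdot> lu C A))
     = (\<Delta> A \<cdot> (((\<epsilon> A \<cdot> n) \<otimes> e A) \<cdot> ru C A)) \<oplus> (\<Delta> A \<cdot> ((e A \<otimes> \<epsilon> A) \<cdot> lu C A))"
    using n by (simp add: comp_madd)
  also have "\<dots> = (\<epsilon> A \<cdot> n) \<oplus> \<epsilon> A"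
    using n cop_counit_right_comp[of "\<epsilon> A \<cdot> n" A] cop_counit_left_comp[of "\<epsilon> A" A] by simp
  also have "\<dots> = \<epsilon> A \<oplus> (\<epsilon> A \<cdot> n)" using n(1-3) by (intro madd_commute) simp_all
  also have "\<dots> = \<epsilon> A \<cdot> (idt C A \<oplus> n)" using n(1-3) by (simp add: comp_madd)
  also have "\<dots> = zerm C (!A) A" using n by simp
  finally show "\<Delta> A \<cdot> (!\<^sub>m n \<otimes> idt C (!A)) \<cdot> \<nabla> A \<cdot> \<epsilon> A = e A \<cdot> u A \<cdot> \<epsilon> A"
    by (simp add: cou_unitm_eps)
qed (use n in simp_all)

lemma bimonoid_bang: "bimonoid C (!A) (\<nabla> A) (u A) (\<Delta> A) (e A)"
  unfolding bimonoid_def hom_iff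
  using nabla_assoc nabla_unit_left nabla_unit_right cop_coassoc cop_counit_left cop_counit_right
    nabla_cop unitm_cop nabla_cou unitm_cou
  by simp

lemma cocommutative_hopf_monoid_bang:
  assumes "n \<in> hom C A A" "idt C A \<oplus> n = zerm C A A"
  shows "cocommutative_hopf_monoid C (!A) (\<nabla> A) (u A) (\<Delta> A) (e A) (!\<^sub>m n)"
  unfolding cocommutative_hopf_monoid_def hopf_monoid_def
  using assms bimonoid_bang antipode_right[of n A] antipode_left[of n A] cop_cocommute
  by (simp add: hom_iff)

lemma antipode_comp_cou:
  assumes S: "arr S" "src S = !A" "tgt S = !A"
    and antipode: "\<Delta> A \<cdot> (idt C (!A) \<otimes> S) \<cdot> \<nabla> A = e A \<cdot> u A"
  shows "S \<cdot> e A = e A"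
proof -
  have "(idt C (!A) \<otimes> S) \<cdot> ((e A \<otimes> e A) \<cdot> lu C K) = ((idt C (!A) \<otimes> S) \<cdot> (e A \<otimes> e A)) \<cdot> lu C K"
    using S by (intro comp_assoc[symmetric]) simp_all
  also have "(idt C (!A) \<otimes> S) \<cdot> (e A \<otimes> e A) = e A \<otimes> (S \<cdot> e A)"
    using S by (simp add: tensor_comp[symmetric])
  finally have factor: "(e A \<otimes> (S \<cdot> e A)) \<cdot> lu C K = (idt C (!A) \<otimes> S) \<cdot> ((e A \<otimes> e A) \<cdot> lu C K)" ..
  have "S \<cdot> e A = \<Delta> A \<cdot> ((e A \<otimes> (S \<cdot> e A)) \<cdot> lu C K)"
    using S cop_counit_left_comp[of "S \<cdot> e A" A] by simp
  also have "\<dots> = \<Delta> A \<cdot> ((idt C (!A) \<otimes> S) \<cdot> ((e A \<otimes> e A) \<cdot> lu C K))"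
    by (simp only: factor)
  also have "\<dots> = \<Delta> A \<cdot> (idt C (!A) \<otimes> S) \<cdot> \<nabla> A \<cdot> e A"
    using S by (simp add: comp_assoc nabla_cou)
  also have "\<dots> = e A"
    using antipode by (simp add: comp_assoc)
  finally show ?thesis .
qed

text \<open>Composing the antipode equation with \<open>m\<^sub>K\<close> and \<open>\<epsilon> K\<close> turns it into
  \<open>idt C K \<oplus> n = 0\<close> for the scalar \<open>n = m\<^sub>K \<cdot> S \<cdot> \<epsilon> K\<close>, up to the unitors.\<close>

lemma unit_negative_of_antipode:
  assumes S: "arr S" "src S = !K" "tgt S = !K"
    and antipode: "\<Delta> K \<cdot> (idt C (!K) \<otimes> S) \<cdot> \<nabla> K = e K \<cdot> u K"
  shows "idt C K \<oplus> (cinv C (ru C K) \<cdot> (lu C K \<cdot> (m\<^sub>K \<cdot> S \<cdot> \<epsilon> K))) = zerm C K K"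
proof -
  let ?n = "m\<^sub>K \<cdot> S \<cdot> \<epsilon> K"
  have "zerm C K K = m\<^sub>K \<cdot> (e K \<cdot> u K) \<cdot> \<epsilon> K"
    by (simp add: comp_assoc unitm_eps)
  also have "\<dots> = (m\<^sub>K \<cdot> \<Delta> K) \<cdot> ((idt C (!K) \<otimes> S) \<cdot> eps_sum K)"
    using S by (simp flip: antipode add: comp_assoc nabla_eps)
  also have "\<dots> = cinv C (ru C K) \<cdot> (((m\<^sub>K \<otimes> m\<^sub>K) \<cdot> (idt C (!K) \<otimes> S)) \<cdot> eps_sum K)"
    using S by (simp add: monK_cop comp_assoc)
  also have "(m\<^sub>K \<otimes> m\<^sub>K) \<cdot> (idt C (!K) \<otimes> S) = m\<^sub>K \<otimes> (m\<^sub>K \<cdot> S)"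
    using S by (simp add: tensor_comp[symmetric])
  also have "(m\<^sub>K \<otimes> (m\<^sub>K \<cdot> S)) \<cdot> eps_sum K
      = (((m\<^sub>K \<cdot> \<epsilon> K) \<otimes> (m\<^sub>K \<cdot> S \<cdot> e K)) \<cdot> ru C K) \<oplus> (((m\<^sub>K \<cdot> e K) \<otimes> ?n) \<cdot> lu C K)"
    using S by (intro tensor_comp_eps_sum) simp_all
  also have "\<dots> = ru C K \<oplus> (lu C K \<cdot> ?n)"
    using S antipode_comp_cou[OF S antipode] lu_natural[of ?n] by (simp add: comp_assoc)
  finally show ?thesis using S by (simp add: comp_madd)
qed

end

theorem proposition7p9:
  fixes C :: "('o,'m) asmc" and M :: "('o,'m) mcm"
  assumes "additive_smc C"
    and "monoidal_coalgebra_modality C M"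
  shows "(\<exists>S :: 'o \<Rightarrow> 'm.
            (\<forall>A B f. f \<in> hom C A B \<longrightarrow>
                cmp C (bangm M f) (S B) = cmp C (S A) (bangm M f)) \<and>
            (\<forall>A. cocommutative_hopf_monoid C (bang M A) (nabla C M A) (unitm C M A)
                   (cop M A) (cou M A) (S A)))
         \<longleftrightarrow> has_negatives C"
proof -
  interpret additive_coalgebra_modality C M
    using assms by unfold_locales
  show ?thesis
  proof
    assume "\<exists>S. (\<forall>A B f. f \<in> hom C A B \<longrightarrow> !\<^sub>m f \<cdot> S B = S A \<cdot> !\<^sub>m f) \<and>
      (\<forall>A. cocommutative_hopf_monoid C (!A) (\<nabla> A) (u A) (\<Delta> A) (e A) (S A))"
    then obtain S where "cocommutative_hopf_monoid C (!K) (\<nabla> K) (u K) (\<Delta> K) (e K) S"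
      by blast
    then have S: "arr S" "src S = !K" "tgt S = !K" "\<Delta> K \<cdot> (idt C (!K) \<otimes> S) \<cdot> \<nabla> K = e K \<cdot> u K"
      unfolding cocommutative_hopf_monoid_def hopf_monoid_def hom_iff by auto
    show "has_negatives C"
      by (rule has_negativesI_unit[OF _ unit_negative_of_antipode[OF S]]) (use S in \<open>simp add: hom_iff\<close>)
  next
    assume "has_negatives C"
    then have "\<forall>A. \<exists>n. n \<in> hom C A A \<and> idt C A \<oplus> n = zerm C A A"
      unfolding has_negatives_def by (metis arr_idt src_idt tgt_idt hom_iff)
    then obtain N where N: "\<And>A. N A \<in> hom C A A" "\<And>A. idt C A \<oplus> N A = zerm C A A"
      by metis
    have natural: "!\<^sub>m f \<cdot> !\<^sub>m (N B) = !\<^sub>m (N A) \<cdot> !\<^sub>m f" if "f \<in> hom C A B" for A B f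
      using that N negative_natural[of f A B N] by (simp add: hom_iff flip: bangm_comp)
    have "cocommutative_hopf_monoid C (!A) (\<nabla> A) (u A) (\<Delta> A) (e A) (!\<^sub>m (N A))" for A
      using N by (rule cocommutative_hopf_monoid_bang)
    with natural show "\<exists>S. (\<forall>A B f. f \<in> hom C A B \<longrightarrow> !\<^sub>m f \<cdot> S B = S A \<cdot> !\<^sub>m f) \<and>
      (\<forall>A. cocommutative_hopf_monoid C (!A) (\<nabla> A) (u A) (\<Delta> A) (e A) (S A))"
      by (intro exI[of _ "\<lambda>A. !\<^sub>m (N A)"]) blast
  qed
qed

end
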